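(* For every $\phi\in\mathcal{H}_{+}$ one has $K\eta\phi=\eta\,\Pi B\Pi\phi$. In particular, the restriction of $\Pi B\Pi$ to $\mathcal{H}_{+}$ is unitarily equivalent to $K$.
   Context: Work on $L^2(\mathbb{R})$ (momentum representation). Let $(U\phi)(k)=\exp(-\mathrm{i}k^2)\phi(k)$. Let $\mathcal{F}^{*}$ denote the inverse $L^2$-Fourier transform, $(\mathcal{F}^{*}\phi)(x)=\frac{1}{\sqrt{2\pi}}\int_{-\infty}^{\infty}e^{\mathrm{i}kx}\phi(k)\,\mathrm{d}k$, and $\mathcal{F}$ the Fourier transform. Let $\Pi$ be the orthogonal projection with $(\Pi f)(x)=f(x)$ for $x>0$ and $0$ for $x<0$, and $\mathcal{H}_{+}:=\Pi(L^2(\mathbb{R}))$. Define $B:=U\mathcal{F}\Pi\mathcal{F}^{*}U^{*}-U^{*}\mathcal{F}\Pi\mathcal{F}^{*}U$ (i.e. $B=\widetilde{\Pi}_{-1}-\widetilde{\Pi}_{1}$ with $\widetilde{\Pi}_t=U_t^*\mathcal{F}\Pi\mathcal{F}^*U_t$, $U_t$ multiplication by $e^{-\mathrm{i}k^2t}$). Let $\eta:\mathcal{H}_{+}\to L^2(\mathbb{R}_{>0})$ be the unitary map $(\eta\phi)(k)=\phi(k)$ for $k>0$. Let $K:L^2(\mathbb{R}_{>0})\to L^2(\mathbb{R}_{>0})$ be the integral operator \[ (Kf)(k)=-\frac{1}{\pi}\int_0^\infty\frac{\sin(k^2-q^2)}{k-q}\,f(q)\,\mathrm{d}q . \] *)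

theory Defs
  imports "HOL-Analysis.Analysis"
begin

text \<open>Elements of L2(R) are represented by square-integrable Borel functions
  real => complex; equalities of L2 elements are stated almost everywhere.\<close>

definition square_integrable :: "(real \<Rightarrow> complex) \<Rightarrow> bool" where
  "square_integrable f \<longleftrightarrow> f \<in> borel_measurable lborel \<and>
     integrable lborel (\<lambda>x. (norm (f x))^2)"

definition trunc_fourier :: "real \<Rightarrow> (real \<Rightarrow> complex) \<Rightarrow> real \<Rightarrow> real \<Rightarrow> complex" where
  "trunc_fourier s f R k =
     complex_of_real (1 / sqrt (2 * pi)) *
       set_lebesgue_integral lborel {-R..R} (\<lambda>x. exp (complex_of_real (s * k * x) * \<i>) * f x)"

definition fourier_rel :: "real \<Rightarrow> (real \<Rightarrow> complex) \<Rightarrow> (real \<Rightarrow> complex) \<Rightarrow> bool" where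
  "fourier_rel s f g \<longleftrightarrow> square_integrable g \<and>
     ((\<lambda>R. \<integral>\<^sup>+ k. ennreal ((norm (trunc_fourier s f R k - g k))^2) \<partial>lborel) \<longlongrightarrow> 0) at_top"

definition FT :: "(real \<Rightarrow> complex) \<Rightarrow> real \<Rightarrow> complex" where
  "FT f = (SOME g. fourier_rel (-1) f g)"

definition iFT :: "(real \<Rightarrow> complex) \<Rightarrow> real \<Rightarrow> complex" where
  "iFT f = (SOME g. fourier_rel 1 f g)"

text \<open>U_t: multiplication by exp(-i k^2 t). U = U_1, U* = U_{-1}.\<close>
definition Ut :: "real \<Rightarrow> (real \<Rightarrow> complex) \<Rightarrow> real \<Rightarrow> complex" where
  "Ut t \<phi> k = exp (- \<i> * complex_of_real (k^2 * t)) * \<phi> k"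

definition Proj :: "(real \<Rightarrow> complex) \<Rightarrow> real \<Rightarrow> complex" where
  "Proj f x = (if x > 0 then f x else 0)"

definition Pitilde :: "real \<Rightarrow> (real \<Rightarrow> complex) \<Rightarrow> real \<Rightarrow> complex" where
  "Pitilde t \<phi> = Ut (-t) (FT (Proj (iFT (Ut t \<phi>))))"

text \<open>B = Pi~_{-1} - Pi~_1 = U F Pi F^* U^* - U^* F Pi F^* U.\<close>
definition Bop :: "(real \<Rightarrow> complex) \<Rightarrow> real \<Rightarrow> complex" where
  "Bop \<phi> k = Pitilde (-1) \<phi> k - Pitilde 1 \<phi> k"

text \<open>eta: restriction to k > 0 (functions on R_{>0} represented by functions
  vanishing on k <= 0).\<close>
definition eta :: "(real \<Rightarrow> complex) \<Rightarrow> real \<Rightarrow> complex" where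
  "eta \<phi> k = (if k > 0 then \<phi> k else 0)"

text \<open>(K f)(k) = -(1/pi) * integral_0^infty sin(k^2 - q^2)/(k - q) f(q) dq,
  for k > 0 (the integral converges absolutely for f in L2).\<close>
definition Kop :: "(real \<Rightarrow> complex) \<Rightarrow> real \<Rightarrow> complex" where
  "Kop f k = (if k > 0 then
      - complex_of_real (1 / pi) *
        set_lebesgue_integral lborel {0<..}
          (\<lambda>q. complex_of_real (sin (k^2 - q^2) / (k - q)) * f q)
     else 0)"

end

(* Write B = U F Pi F* U* - U* F Pi F* U and replace the outer Fourier transform F by its
   truncation to [-R, R].  Fubini and the elementary integral of exp(i a x) over [0, R] turn the
   truncated operator into an explicit integral:
     (B_R psi)(k) = (1/pi) * integral psi(q) sin(k^2 - q^2)/(k - q) (exp(i (q - k) R) - 1) dq.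
   Along R = n pi the oscillating part vanishes in the limit by a Riemann-Lebesgue argument, so
   B_R psi tends pointwise to K psi, while B_R psi tends to B psi in L2 because F is the L2 limit of
   its truncations.  By Fatou's lemma an L2 limit and a pointwise limit agree almost everywhere.

   The L2 Fourier transform is constructed on the way: Bessel's inequality for exponentials with
   frequencies on a lattice, summed over the translates of the lattice, gives the Plancherel
   inequality for compactly supported functions; hence the truncated transforms form a Cauchy
   family in L2, and a fast subsequence converges almost everywhere to the limit (Riesz-Fischer). *)

theory Submission
  imports Defs "HOL-Probability.Sinc_Integral"
begin

definition L2_sqnorm :: "(real \<Rightarrow> complex) \<Rightarrow> ennreal" where
  "L2_sqnorm f = (\<integral>\<^sup>+x. ennreal ((cmod (f x))\<^sup>2) \<partial>lborel)"

lemma fourier_rel_iff: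
  "fourier_rel s f g \<longleftrightarrow>
     square_integrable g \<and> ((\<lambda>R. L2_sqnorm (\<lambda>k. trunc_fourier s f R k - g k)) \<longlongrightarrow> 0) at_top"
  by (simp add: fourier_rel_def L2_sqnorm_def)

lemma norm_add_squared_le: "(cmod (a + b))\<^sup>2 \<le> 2 * (cmod a)\<^sup>2 + 2 * (cmod b)\<^sup>2"
proof -
  have "(cmod (a + b))\<^sup>2 \<le> (cmod a + cmod b)\<^sup>2"
    by (intro power_mono norm_triangle_ineq) simp
  also have "\<dots> \<le> 2 * (cmod a)\<^sup>2 + 2 * (cmod b)\<^sup>2"
    using sum_squares_bound[of "cmod a" "cmod b"] by (simp add: power2_sum)
  finally show ?thesis .
qed

lemma L2_sqnorm_add_le:
  assumes [measurable]: "f \<in> borel_measurable borel" "g \<in> borel_measurable borel"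
  shows "L2_sqnorm (\<lambda>x. f x + g x) \<le> 2 * L2_sqnorm f + 2 * L2_sqnorm g"
proof -
  have "L2_sqnorm (\<lambda>x. f x + g x) \<le>
      (\<integral>\<^sup>+x. 2 * ennreal ((cmod (f x))\<^sup>2) + 2 * ennreal ((cmod (g x))\<^sup>2) \<partial>lborel)"
    unfolding L2_sqnorm_def
  proof (intro nn_integral_mono)
    fix x
    have "ennreal ((cmod (f x + g x))\<^sup>2) \<le> ennreal (2 * (cmod (f x))\<^sup>2 + 2 * (cmod (g x))\<^sup>2)"
      by (intro ennreal_leI norm_add_squared_le)
    then show "ennreal ((cmod (f x + g x))\<^sup>2) \<le> 2 * ennreal ((cmod (f x))\<^sup>2) + 2 * ennreal ((cmod (g x))\<^sup>2)"
      by (simp add: ennreal_plus ennreal_mult)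
  qed
  also have "\<dots> = 2 * L2_sqnorm f + 2 * L2_sqnorm g"
    by (simp add: L2_sqnorm_def nn_integral_add nn_integral_cmult)
  finally show ?thesis .
qed

lemma square_integrable_measurable: "square_integrable f \<Longrightarrow> f \<in> borel_measurable borel"
  by (simp add: square_integrable_def)

lemma square_integrable_integrable_sq:
  "square_integrable f \<Longrightarrow> integrable lborel (\<lambda>x. (cmod (f x))\<^sup>2)"
  by (simp add: square_integrable_def)

lemma square_integrable_iff_L2_sqnorm:
  "square_integrable f \<longleftrightarrow> f \<in> borel_measurable borel \<and> L2_sqnorm f < \<infinity>"
  unfolding square_integrable_def L2_sqnorm_def
  by (auto simp: integrable_iff_bounded)

lemma integrable_mult_square_integrable:
  assumes "square_integrable f" "square_integrable g"
  shows "integrable lborel (\<lambda>x. f x * g x)"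
proof (rule Bochner_Integration.integrable_bound)
  show "integrable lborel (\<lambda>x. (cmod (f x))\<^sup>2 + (cmod (g x))\<^sup>2)"
    using assms by (intro Bochner_Integration.integrable_add square_integrable_integrable_sq)
  show "(\<lambda>x. f x * g x) \<in> borel_measurable lborel"
    using assms[THEN square_integrable_measurable] by measurable
  have "cmod (f x) * cmod (g x) \<le> (cmod (f x))\<^sup>2 + (cmod (g x))\<^sup>2" for x
    using sum_squares_bound[of "cmod (f x)" "cmod (g x)"]
      mult_nonneg_nonneg[OF norm_ge_zero norm_ge_zero, of "f x" "g x"] by linarith
  then show "AE x in lborel. norm (f x * g x) \<le> norm ((cmod (f x))\<^sup>2 + (cmod (g x))\<^sup>2)"
    by (simp add: norm_mult)
qed

lemma integrable_mult_bounded: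
  fixes f g :: "real \<Rightarrow> complex"
  assumes f: "integrable lborel f" and g: "g \<in> borel_measurable lborel"
    and bound: "\<And>x. cmod (g x) \<le> B"
  shows "integrable lborel (\<lambda>x. f x * g x)"
proof (rule Bochner_Integration.integrable_bound[of _ "\<lambda>x. B * cmod (f x)"])
  show "integrable lborel (\<lambda>x. B * cmod (f x))" using f by auto
  show "(\<lambda>x. f x * g x) \<in> borel_measurable lborel" using f g by measurable
  have "0 \<le> B" using bound[of 0] norm_ge_zero order_trans by blast
  then show "AE x in lborel. norm (f x * g x) \<le> norm (B * cmod (f x))"
    using bound by (intro AE_I2) (simp add: norm_mult, metis mult.commute mult_left_mono norm_ge_zero)
qed

lemma square_integrable_mult_bounded:
  assumes f: "square_integrable f" and g: "g \<in> borel_measurable lborel" and bound: "\<And>x. cmod (g x) \<le> B"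
  shows "square_integrable (\<lambda>x. f x * g x)"
  unfolding square_integrable_def
proof
  note [measurable] = square_integrable_measurable[OF f]
  show "(\<lambda>x. f x * g x) \<in> borel_measurable lborel" using g by measurable
  show "integrable lborel (\<lambda>x. (cmod (f x * g x))\<^sup>2)"
  proof (rule Bochner_Integration.integrable_bound)
    show "integrable lborel (\<lambda>x. B\<^sup>2 * (cmod (f x))\<^sup>2)"
      using square_integrable_integrable_sq[OF f] by simp
    show "AE x in lborel. norm ((cmod (f x * g x))\<^sup>2) \<le> norm (B\<^sup>2 * (cmod (f x))\<^sup>2)"
    proof (intro AE_I2)
      fix x
      have "(cmod (g x))\<^sup>2 \<le> B\<^sup>2"
        using bound[of x] by (intro power_mono) auto
      then show "norm ((cmod (f x * g x))\<^sup>2) \<le> norm (B\<^sup>2 * (cmod (f x))\<^sup>2)"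
        by (simp add: norm_mult power_mult_distrib) (metis mult.commute mult_left_mono zero_le_power2)
    qed
  qed (use g in measurable)
qed

lemma square_integrable_add:
  assumes "square_integrable f" "square_integrable g"
  shows "square_integrable (\<lambda>x. f x + g x)"
proof -
  note [measurable] = assms[THEN square_integrable_measurable]
  have "L2_sqnorm (\<lambda>x. f x + g x) \<le> 2 * L2_sqnorm f + 2 * L2_sqnorm g"
    by (rule L2_sqnorm_add_le) measurable
  also have "\<dots> < \<infinity>"
    using assms by (simp add: square_integrable_iff_L2_sqnorm ennreal_mult_less_top)
  finally show ?thesis by (simp add: square_integrable_iff_L2_sqnorm)
qed

lemma square_integrable_cmult:
  "square_integrable f \<Longrightarrow> square_integrable (\<lambda>x. c * f x)"
  unfolding square_integrable_def
  by (auto simp: norm_mult power_mult_distrib intro!: integrable_mult_right)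

lemma square_integrable_cnj:
  "square_integrable f \<Longrightarrow> square_integrable (\<lambda>x. cnj (f x))"
  unfolding square_integrable_def
  by (auto intro!: borel_measurable_continuous_on[where f=cnj] continuous_intros)

lemma square_integrable_diff:
  assumes "square_integrable f" "square_integrable g"
  shows "square_integrable (\<lambda>x. f x - g x)"
  using square_integrable_add[OF assms(1) square_integrable_cmult[OF assms(2), of "-1"]] by simp

lemma square_integrable_sum:
  "finite X \<Longrightarrow> (\<And>y. y \<in> X \<Longrightarrow> square_integrable (f y)) \<Longrightarrow>
    square_integrable (\<lambda>x. \<Sum>y\<in>X. f y x)"
proof (induction X rule: finite_induct)
  case empty
  then show ?case by (simp add: square_integrable_def)
qed (simp add: square_integrable_add)

lemma square_integrable_bounded_support:
  assumes "g \<in> borel_measurable lborel" "\<And>x. cmod (g x) \<le> C"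
    and "\<And>x. g x \<noteq> 0 \<Longrightarrow> x \<in> {a..b}"
  shows "square_integrable g"
  unfolding square_integrable_def
proof
  show "g \<in> borel_measurable lborel" by fact
  show "integrable lborel (\<lambda>x. (cmod (g x))\<^sup>2)"
  proof (rule Bochner_Integration.integrable_bound)
    show "integrable lborel (\<lambda>x. C\<^sup>2 * indicator {a..b} x)"
      by (rule borel_integrable_atLeastAtMost) auto
    show "(\<lambda>x. (cmod (g x))\<^sup>2) \<in> borel_measurable lborel"
      using assms(1) by measurable
    have "0 \<le> C" using assms(2)[of 0] norm_ge_zero order_trans by blast
    then show "AE x in lborel. norm ((cmod (g x))\<^sup>2) \<le> norm (C\<^sup>2 * indicator {a..b} x)"
      using assms(2,3) by (intro AE_I2) (fastforce simp: indicator_def intro: power_mono)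
  qed
qed

lemma square_integrable_indicator_mult:
  assumes "square_integrable f"
  shows "square_integrable (\<lambda>x. indicator {a..b} x * f x)"
proof -
  note [measurable] = square_integrable_measurable[OF assms]
  show ?thesis
    unfolding square_integrable_def
  proof
    show "(\<lambda>x. indicator {a..b} x * f x) \<in> borel_measurable lborel" by measurable
    show "integrable lborel (\<lambda>x. (cmod (indicator {a..b} x * f x))\<^sup>2)"
      by (rule Bochner_Integration.integrable_bound[OF square_integrable_integrable_sq[OF assms]])
        (auto simp: indicator_def)
  qed
qed

lemma integrable_indicator_mult:
  assumes "square_integrable f"
  shows "integrable lborel (\<lambda>x. indicator {a..b} x * f x)"
proof -
  have "square_integrable (\<lambda>x. indicator {a..b} x :: complex)"
    by (rule square_integrable_bounded_support[where C=1 and a=a and b=b]) (auto simp: indicator_def)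
  from integrable_mult_square_integrable[OF this assms] show ?thesis .
qed

lemma square_integrable_decay:
  assumes "g \<in> borel_measurable lborel" and "\<And>q. (cmod (g q))\<^sup>2 \<le> C / (1 + (q - k)\<^sup>2)"
  shows "square_integrable g"
  unfolding square_integrable_def
proof
  show "g \<in> borel_measurable lborel" by fact
  have "integrable lborel (\<lambda>x::real. inverse (1 + x\<^sup>2))"
    using integrable_inverse_1_plus_square by (simp add: set_integrable_def einterval_def)
  then have "integrable lborel (\<lambda>x. inverse (1 + (- k + 1 * x)\<^sup>2))"
    by (rule lborel_integrable_real_affine) simp
  then have "integrable lborel (\<lambda>q. C * inverse (1 + (q - k)\<^sup>2))"
    by (intro Bochner_Integration.integrable_mult_right) simp
  then show "integrable lborel (\<lambda>x. (cmod (g x))\<^sup>2)"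
  proof (rule Bochner_Integration.integrable_bound)
    show "(\<lambda>x. (cmod (g x))\<^sup>2) \<in> borel_measurable lborel" using assms(1) by measurable
    show "AE x in lborel. norm ((cmod (g x))\<^sup>2) \<le> norm (C * inverse (1 + (x - k)\<^sup>2))"
      using assms(2) by (intro AE_I2) (simp add: divide_inverse order_trans[OF _ abs_ge_self])
  qed
qed

lemma square_integrable_Proj: "square_integrable f \<Longrightarrow> square_integrable (Proj f)"
  unfolding square_integrable_def
proof (elim conjE, intro conjI)
  assume "f \<in> borel_measurable lborel" and "integrable lborel (\<lambda>x. (cmod (f x))\<^sup>2)"
  moreover note [measurable] = \<open>f \<in> borel_measurable lborel\<close>[simplified]
  ultimately show "Proj f \<in> borel_measurable lborel"
    and "integrable lborel (\<lambda>x. (cmod (Proj f x))\<^sup>2)"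
    unfolding Proj_def by (auto intro: Bochner_Integration.integrable_bound)
qed

lemma square_integrable_Ut: "square_integrable \<psi> \<Longrightarrow> square_integrable (Ut t \<psi>)"
  unfolding square_integrable_def Ut_def
  by (auto simp: norm_mult)

lemma Ut_measurable[measurable]:
  "f \<in> borel_measurable borel \<Longrightarrow> Ut t f \<in> borel_measurable borel"
  unfolding Ut_def[abs_def] by measurable

lemma L2_sqnorm_Ut: "L2_sqnorm (Ut t f) = L2_sqnorm f"
  by (simp add: L2_sqnorm_def Ut_def norm_mult)

lemma Cauchy_Schwarz_square_integrable:
  assumes u: "square_integrable u" and v: "square_integrable v"
  shows "(\<integral>x. cmod (u x) * cmod (v x) \<partial>lborel)
    \<le> sqrt (\<integral>x. (cmod (u x))\<^sup>2 \<partial>lborel) * sqrt (\<integral>x. (cmod (v x))\<^sup>2 \<partial>lborel)"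
proof -
  note [measurable] = u[THEN square_integrable_measurable] v[THEN square_integrable_measurable]
  define A where "A = (\<integral>x. cmod (u x) * cmod (v x) \<partial>lborel)"
  define B where "B = (\<integral>x. (cmod (u x))\<^sup>2 \<partial>lborel)"
  define C where "C = (\<integral>x. (cmod (v x))\<^sup>2 \<partial>lborel)"
  have nonneg: "A \<ge> 0" "B \<ge> 0" "C \<ge> 0" by (simp_all add: A_def B_def C_def)
  have uv: "integrable lborel (\<lambda>x. cmod (u x) * cmod (v x))"
    using integrable_norm[OF integrable_mult_square_integrable[OF u v]] by (simp add: norm_mult)
  have "(\<integral>\<^sup>+x. ennreal (cmod (u x)) * ennreal (cmod (v x)) \<partial>lborel)\<^sup>2
      \<le> (\<integral>\<^sup>+x. (ennreal (cmod (u x)))\<^sup>2 \<partial>lborel) * (\<integral>\<^sup>+x. (ennreal (cmod (v x)))\<^sup>2 \<partial>lborel)"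
    by (rule Cauchy_Schwarz_nn_integral) measurable
  also have "(\<integral>\<^sup>+x. ennreal (cmod (u x)) * ennreal (cmod (v x)) \<partial>lborel) = ennreal A"
    unfolding A_def
    by (subst nn_integral_eq_integral[symmetric, OF uv]) (auto simp: ennreal_mult)
  also have "(\<integral>\<^sup>+x. (ennreal (cmod (u x)))\<^sup>2 \<partial>lborel) = ennreal B"
    unfolding B_def
    by (subst nn_integral_eq_integral[symmetric, OF square_integrable_integrable_sq[OF u]])
      (auto simp: ennreal_power)
  also have "(\<integral>\<^sup>+x. (ennreal (cmod (v x)))\<^sup>2 \<partial>lborel) = ennreal C"
    unfolding C_def
    by (subst nn_integral_eq_integral[symmetric, OF square_integrable_integrable_sq[OF v]])
      (auto simp: ennreal_power)
  finally have "A\<^sup>2 \<le> B * C"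
    using nonneg by (simp add: ennreal_power ennreal_mult[symmetric] ennreal_le_iff)
  then have "sqrt (A\<^sup>2) \<le> sqrt (B * C)" by (rule real_sqrt_le_mono)
  then show ?thesis using nonneg by (simp add: A_def B_def C_def real_sqrt_mult)
qed

lemma integral_norm_diff_squared:
  assumes f: "square_integrable f" and g: "square_integrable g"
  shows "(\<integral>x. (cmod (f x - g x))\<^sup>2 \<partial>lborel) =
    (\<integral>x. (cmod (f x))\<^sup>2 \<partial>lborel) - 2 * Re (\<integral>x. f x * cnj (g x) \<partial>lborel) + (\<integral>x. (cmod (g x))\<^sup>2 \<partial>lborel)"
proof -
  define h where "h x = f x * cnj (g x)" for x
  have pointwise: "(cmod (f x - g x))\<^sup>2 = (cmod (f x))\<^sup>2 - 2 * Re (h x) + (cmod (g x))\<^sup>2" for x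
    unfolding h_def by (simp only: cmod_power2) (simp add: power2_diff algebra_simps)
  have h: "integrable lborel h"
    unfolding h_def by (rule integrable_mult_square_integrable[OF f square_integrable_cnj[OF g]])
  have "(\<integral>x. (cmod (f x - g x))\<^sup>2 \<partial>lborel) =
      (\<integral>x. (cmod (f x))\<^sup>2 \<partial>lborel) - 2 * (\<integral>x. Re (h x) \<partial>lborel) + (\<integral>x. (cmod (g x))\<^sup>2 \<partial>lborel)"
    using square_integrable_integrable_sq[OF f] square_integrable_integrable_sq[OF g] integrable_Re[OF h]
    by (simp add: pointwise)
  then show ?thesis
    unfolding h_def[symmetric] using integral_Re[OF h] by simp
qed

lemma integral_norm_orthogonal_sum:
  fixes e :: "'a \<Rightarrow> real \<Rightarrow> complex"
  assumes X: "finite X" and e: "\<And>y. y \<in> X \<Longrightarrow> square_integrable (e y)"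
    and orth: "\<And>y z. y \<in> X \<Longrightarrow> z \<in> X \<Longrightarrow>
      (\<integral>k. e y k * cnj (e z k) \<partial>lborel) = (if y = z then complex_of_real N else 0)"
  shows "(\<integral>k. (cmod (\<Sum>y\<in>X. c y * e y k))\<^sup>2 \<partial>lborel) = N * (\<Sum>y\<in>X. (cmod (c y))\<^sup>2)"
proof -
  define Q where "Q k = (\<Sum>y\<in>X. c y * e y k)" for k
  have norm_sq: "z * cnj z = (complex_of_real (cmod z))\<^sup>2" for z
    using complex_norm_square[of z] by simp
  have "Q k * cnj (Q k) = (\<Sum>y\<in>X. \<Sum>z\<in>X. c y * cnj (c z) * (e y k * cnj (e z k)))" for k
    by (simp add: Q_def sum_product mult_ac)
  then have "(\<integral>k. Q k * cnj (Q k) \<partial>lborel) =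
      (\<Sum>y\<in>X. \<Sum>z\<in>X. c y * cnj (c z) * (\<integral>k. e y k * cnj (e z k) \<partial>lborel))"
    using integrable_mult_square_integrable[OF e square_integrable_cnj[OF e]]
    by (simp add: integral_sum integrable_sum)
  also have "\<dots> = (\<Sum>y\<in>X. \<Sum>z\<in>X. if y = z then c y * cnj (c y) * complex_of_real N else 0)"
    by (intro sum.cong refl) (simp add: orth)
  also have "\<dots> = complex_of_real (N * (\<Sum>y\<in>X. (cmod (c y))\<^sup>2))"
    using X by (simp add: norm_sq sum_distrib_left mult.commute)
  also have "(\<integral>k. Q k * cnj (Q k) \<partial>lborel) = complex_of_real (\<integral>k. (cmod (Q k))\<^sup>2 \<partial>lborel)"
    by (simp only: integral_complex_of_real[symmetric] complex_norm_square)
  finally show ?thesis by (simp only: Q_def of_real_eq_iff)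
qed

lemma bessel_inequality:
  fixes f :: "real \<Rightarrow> complex" and e :: "'a \<Rightarrow> real \<Rightarrow> complex"
  assumes f: "square_integrable f" and X: "finite X" and N: "N > 0"
    and e: "\<And>y. y \<in> X \<Longrightarrow> square_integrable (e y)"
    and orth: "\<And>y z. y \<in> X \<Longrightarrow> z \<in> X \<Longrightarrow>
      (\<integral>k. e y k * cnj (e z k) \<partial>lborel) = (if y = z then complex_of_real N else 0)"
  shows "(\<Sum>y\<in>X. (cmod (\<integral>k. f k * cnj (e y k) \<partial>lborel))\<^sup>2) \<le> N * (\<integral>k. (cmod (f k))\<^sup>2 \<partial>lborel)"
proof -
  define c where "c y = (\<integral>k. f k * cnj (e y k) \<partial>lborel)" for y
  define S where "S = (\<Sum>y\<in>X. (cmod (c y))\<^sup>2)"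
  \<comment> \<open>the orthogonal projection of f onto the span of the e y\<close>
  define P where "P k = (\<Sum>y\<in>X. c y * e y k) / complex_of_real N" for k
  have norm_sq: "z * cnj z = (complex_of_real (cmod z))\<^sup>2" for z
    using complex_norm_square[of z] by simp
  have P: "square_integrable P"
    unfolding P_def divide_inverse
    by (subst mult.commute, intro square_integrable_cmult square_integrable_sum[OF X] e)
  have "(\<integral>k. f k * cnj (P k) \<partial>lborel) =
      (\<integral>k. (\<Sum>y\<in>X. cnj (c y) * (f k * cnj (e y k))) / complex_of_real N \<partial>lborel)"
    by (simp add: P_def sum_distrib_left algebra_simps)
  also have "\<dots> = (\<Sum>y\<in>X. complex_of_real ((cmod (c y))\<^sup>2)) / complex_of_real N"
    using integrable_mult_square_integrable[OF f square_integrable_cnj[OF e]]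
    by (simp add: integral_sum c_def norm_sq mult.commute)
  finally have fP: "(\<integral>k. f k * cnj (P k) \<partial>lborel) = complex_of_real (S / N)"
    by (simp add: S_def)
  have "(\<integral>k. (cmod (P k))\<^sup>2 \<partial>lborel) = (\<integral>k. (cmod (\<Sum>y\<in>X. c y * e y k))\<^sup>2 \<partial>lborel) / N\<^sup>2"
    by (simp add: P_def norm_divide power_divide)
  also have "\<dots> = S / N"
    using N by (simp add: integral_norm_orthogonal_sum[OF X e orth] S_def) (simp add: power2_eq_square)
  finally have PP: "(\<integral>k. (cmod (P k))\<^sup>2 \<partial>lborel) = S / N" .
  have "0 \<le> (\<integral>k. (cmod (f k - P k))\<^sup>2 \<partial>lborel)" by simp
  also have "\<dots> = (\<integral>k. (cmod (f k))\<^sup>2 \<partial>lborel) - S / N"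
    by (simp add: integral_norm_diff_squared[OF f P] fP PP)
  finally show ?thesis
    using N by (simp add: S_def c_def field_simps)
qed

lemma integral_cexp_Icc:
  assumes "a \<le> b"
  shows "(LINT k:{a..b}|lborel. exp (\<i> * complex_of_real (\<alpha> * k))) =
    (if \<alpha> = 0 then complex_of_real (b - a)
     else (exp (\<i> * complex_of_real (\<alpha> * b)) - exp (\<i> * complex_of_real (\<alpha> * a))) / (\<i> * complex_of_real \<alpha>))"
proof (cases "\<alpha> = 0")
  case True
  then show ?thesis using assms by (simp add: set_integral_const scaleR_conv_of_real)
next
  case False
  have "((\<lambda>k. \<i> * complex_of_real \<alpha> * exp (\<i> * complex_of_real (\<alpha> * k))) has_integral
      (exp (\<i> * complex_of_real (\<alpha> * b)) - exp (\<i> * complex_of_real (\<alpha> * a)))) {a..b}"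
  proof (rule fundamental_theorem_of_calculus[OF assms])
    fix k
    show "((\<lambda>k. exp (\<i> * complex_of_real (\<alpha> * k))) has_vector_derivative
        (\<i> * complex_of_real \<alpha> * exp (\<i> * complex_of_real (\<alpha> * k)))) (at k within {a..b})"
      by (auto intro!: derivative_eq_intros simp: Re_exp Im_exp has_vector_derivative_complex_iff)
  qed
  then have "integral {a..b} (\<lambda>k. \<i> * complex_of_real \<alpha> * exp (\<i> * complex_of_real (\<alpha> * k))) =
      exp (\<i> * complex_of_real (\<alpha> * b)) - exp (\<i> * complex_of_real (\<alpha> * a))"
    by (rule integral_unique)
  moreover have "set_integrable lborel {a..b} (\<lambda>k. \<i> * complex_of_real \<alpha> * exp (\<i> * complex_of_real (\<alpha> * k)))"
    by (rule borel_integrable_atLeastAtMost') (intro continuous_intros)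
  ultimately have "(LINT k:{a..b}|lborel. \<i> * complex_of_real \<alpha> * exp (\<i> * complex_of_real (\<alpha> * k))) =
      exp (\<i> * complex_of_real (\<alpha> * b)) - exp (\<i> * complex_of_real (\<alpha> * a))"
    by (simp only: set_borel_integral_eq_integral(2))
  then have "\<i> * complex_of_real \<alpha> * (LINT k:{a..b}|lborel. exp (\<i> * complex_of_real (\<alpha> * k))) =
      exp (\<i> * complex_of_real (\<alpha> * b)) - exp (\<i> * complex_of_real (\<alpha> * a))"
    by (simp add: set_integral_mult_right)
  then show ?thesis using False by (simp add: field_simps)
qed

lemma integral_cexp_symmetric:
  assumes "L > 0" and "sin (\<alpha> * L) = 0"
  shows "(\<integral>k. indicator {-L..L} k * exp (\<i> * complex_of_real (\<alpha> * k)) \<partial>lborel) =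
    (if \<alpha> = 0 then complex_of_real (2 * L) else 0)"
proof -
  have "exp (\<i> * complex_of_real (\<alpha> * L)) = exp (\<i> * complex_of_real (\<alpha> * - L))"
    using assms(2) by (simp add: complex_eq_iff Re_exp Im_exp)
  moreover have "(\<integral>k. indicator {-L..L} k * exp (\<i> * complex_of_real (\<alpha> * k)) \<partial>lborel) =
      (LINT k:{-L..L}|lborel. exp (\<i> * complex_of_real (\<alpha> * k)))"
    unfolding set_lebesgue_integral_def
    by (intro Bochner_Integration.integral_cong) (auto simp: indicator_def)
  ultimately show ?thesis
    by (subst (asm) integral_cexp_Icc) (use assms(1) in auto)
qed

lemma bessel_inequality_cexp:
  fixes f :: "real \<Rightarrow> complex"
  assumes f: "square_integrable f" and L: "L > 0"
    and supp: "\<And>k. f k \<noteq> 0 \<Longrightarrow> k \<in> {-L..L}"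
    and X: "finite X" and orth: "\<And>x y. x \<in> X \<Longrightarrow> y \<in> X \<Longrightarrow> x \<noteq> y \<Longrightarrow> sin ((x - y) * L) = 0"
  shows "(\<Sum>x\<in>X. (cmod (\<integral>k. f k * exp (\<i> * complex_of_real (x * k)) \<partial>lborel))\<^sup>2)
      \<le> 2 * L * (\<integral>k. (cmod (f k))\<^sup>2 \<partial>lborel)"
proof -
  define e where "e x k = (indicator {-L..L} k :: complex) * exp (- (\<i> * complex_of_real (x * k)))" for x k
  have cnj_e: "cnj (e x k) = indicator {-L..L} k * exp (\<i> * complex_of_real (x * k))" for x k
    by (simp add: e_def exp_cnj indicator_def)
  have fe: "f k * cnj (e x k) = f k * exp (\<i> * complex_of_real (x * k))" for x k
    using supp[of k] by (cases "f k = 0") (auto simp: cnj_e indicator_def)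
  have "(\<Sum>x\<in>X. (cmod (\<integral>k. f k * exp (\<i> * complex_of_real (x * k)) \<partial>lborel))\<^sup>2) =
      (\<Sum>x\<in>X. (cmod (\<integral>k. f k * cnj (e x k) \<partial>lborel))\<^sup>2)"
    by (simp only: fe)
  also have "\<dots> \<le> 2 * L * (\<integral>k. (cmod (f k))\<^sup>2 \<partial>lborel)"
  proof (rule bessel_inequality[OF f X])
    show "2 * L > 0" using L by simp
    show "square_integrable (e x)" for x
    proof (rule square_integrable_bounded_support[where C=1 and a="-L" and b=L])
      show "e x \<in> borel_measurable lborel" unfolding e_def
        by (intro borel_measurable_times borel_measurable_continuous_onI continuous_intros) auto
    qed (auto simp: e_def indicator_def norm_mult)
    fix y z assume "y \<in> X" "z \<in> X"
    have "(\<integral>k. e y k * cnj (e z k) \<partial>lborel) =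
        (\<integral>k. indicator {-L..L} k * exp (\<i> * complex_of_real ((z - y) * k)) \<partial>lborel)"
      by (intro Bochner_Integration.integral_cong)
        (auto simp: e_def indicator_def exp_cnj mult_exp_exp algebra_simps)
    also have "\<dots> = (if z - y = 0 then complex_of_real (2 * L) else 0)"
      using orth[OF \<open>z \<in> X\<close> \<open>y \<in> X\<close>] by (intro integral_cexp_symmetric[OF L]) force
    finally show "(\<integral>k. e y k * cnj (e z k) \<partial>lborel) = (if y = z then complex_of_real (2 * L) else 0)"
      by auto
  qed
  finally show ?thesis .
qed

lemma fourier_integral_measurable[measurable]:
  assumes [measurable]: "f \<in> borel_measurable borel"
  shows "(\<lambda>x. \<integral>k. f k * exp (\<i> * complex_of_real (x * k)) \<partial>lborel) \<in> borel_measurable borel"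
proof -
  have "(\<lambda>(x, k). f k * exp (\<i> * complex_of_real (x * k))) \<in> borel_measurable (lborel \<Otimes>\<^sub>M lborel)"
    by measurable
  from lborel.borel_measurable_lebesgue_integral[OF this] show ?thesis by simp
qed

lemma indicator_lattice_cells:
  assumes "h > 0"
  shows "(indicator {-(real n * h)..<real n * h} x :: ennreal) =
    (\<Sum>j\<in>{-int n..<int n}. indicator {of_int j * h..<(of_int j + 1) * h} x)"
proof -
  have cell: "x \<in> {of_int j * h..<(of_int j + 1) * h} \<longleftrightarrow> j = \<lfloor>x / h\<rfloor>" for j
    using assms floor_eq_iff[of "x / h" j] by (auto simp: field_simps)
  have "x \<in> {-(real n * h)..<real n * h} \<longleftrightarrow> \<lfloor>x / h\<rfloor> \<in> {-int n..<int n}"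
    using assms by (auto simp: field_simps le_floor_iff floor_less_iff)
  moreover have "(\<Sum>j\<in>{-int n..<int n}. indicator {of_int j * h..<(of_int j + 1) * h} x :: ennreal) =
      (\<Sum>j\<in>{-int n..<int n}. if j = \<lfloor>x / h\<rfloor> then 1 else 0)"
    by (intro sum.cong) (auto simp: indicator_def cell simp del: atLeastLessThan_iff)
  ultimately show ?thesis by (simp add: indicator_def)
qed

lemma nn_integral_interval_le_lattice_sums:
  fixes F :: "real \<Rightarrow> ennreal"
  assumes [measurable]: "F \<in> borel_measurable borel" and h: "h > 0"
    and sums: "\<And>y. (\<Sum>j\<in>{-int n..<int n}. F (y + of_int j * h)) \<le> M"
  shows "(\<integral>\<^sup>+x. F x * indicator {-(real n * h)..<real n * h} x \<partial>lborel) \<le> ennreal h * M"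
proof -
  have shift: "(\<integral>\<^sup>+x. F x * indicator {of_int j * h..<(of_int j + 1) * h} x \<partial>lborel) =
      (\<integral>\<^sup>+y. F (y + of_int j * h) * indicator {0..<h} y \<partial>lborel)" for j :: int
  proof -
    have "(\<integral>\<^sup>+x. F x * indicator {of_int j * h..<(of_int j + 1) * h} x \<partial>lborel) =
        (\<integral>\<^sup>+y. F (of_int j * h + 1 * y) * indicator {of_int j * h..<(of_int j + 1) * h} (of_int j * h + 1 * y) \<partial>lborel)"
      using nn_integral_real_affine[where c=1 and t="of_int j * h"
          and f="\<lambda>x. F x * indicator {of_int j * h..<(of_int j + 1) * h} x"] by simp
    also have "\<dots> = (\<integral>\<^sup>+y. F (y + of_int j * h) * indicator {0..<h} y \<partial>lborel)"
      by (intro nn_integral_cong) (auto simp: indicator_def algebra_simps)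
    finally show ?thesis .
  qed
  have "(\<integral>\<^sup>+x. F x * indicator {-(real n * h)..<real n * h} x \<partial>lborel) =
      (\<integral>\<^sup>+x. (\<Sum>j\<in>{-int n..<int n}. F x * indicator {of_int j * h..<(of_int j + 1) * h} x) \<partial>lborel)"
    unfolding indicator_lattice_cells[OF h] sum_distrib_left ..
  also have "\<dots> = (\<Sum>j\<in>{-int n..<int n}. \<integral>\<^sup>+x. F x * indicator {of_int j * h..<(of_int j + 1) * h} x \<partial>lborel)"
    by (rule nn_integral_sum) simp
  also have "\<dots> = (\<integral>\<^sup>+y. (\<Sum>j\<in>{-int n..<int n}. F (y + of_int j * h)) * indicator {0..<h} y \<partial>lborel)"
    unfolding shift sum_distrib_right by (rule nn_integral_sum[symmetric]) simp
  also have "\<dots> \<le> (\<integral>\<^sup>+y. M * indicator {0..<h} y \<partial>lborel)"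
    by (intro nn_integral_mono mult_right_mono sums) simp
  also have "\<dots> = ennreal h * M"
    using h by (simp add: nn_integral_cmult_indicator mult.commute)
  finally show ?thesis .
qed

lemma nn_integral_le_lattice_sums:
  fixes F :: "real \<Rightarrow> ennreal"
  assumes [measurable]: "F \<in> borel_measurable borel" and h: "h > 0"
    and sums: "\<And>y n. (\<Sum>j\<in>{-int n..<int n}. F (y + of_int j * h)) \<le> M"
  shows "(\<integral>\<^sup>+x. F x \<partial>lborel) \<le> ennreal h * M"
proof -
  define A where "A n = {-(real n * h)..<real n * h}" for n :: nat
  have "incseq A"
    using h by (auto simp: A_def incseq_def intro: order_trans[OF _ mult_right_mono]
        order_less_le_trans[OF _ mult_right_mono])
  then have "incseq (\<lambda>n x. F x * indicator (A n) x)"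
    by (auto simp: incseq_def le_fun_def indicator_def intro!: mult_left_mono)
  moreover have "(SUP n. F x * indicator (A n) x) = F x" for x
  proof (rule antisym)
    show "(SUP n. F x * indicator (A n) x) \<le> F x"
      by (rule SUP_least) (simp add: indicator_def)
    obtain n where "\<bar>x\<bar> / h < real n" using reals_Archimedean2 by blast
    then have "x \<in> A n" using h by (auto simp: A_def field_simps abs_less_iff)
    then show "F x \<le> (SUP n. F x * indicator (A n) x)"
      by (intro SUP_upper2[of n]) auto
  qed
  ultimately have "(\<integral>\<^sup>+x. F x \<partial>lborel) = (SUP n. \<integral>\<^sup>+x. F x * indicator (A n) x \<partial>lborel)"
    using nn_integral_monotone_convergence_SUP[of "\<lambda>n x. F x * indicator (A n) x" lborel]
    by (simp add: A_def)
  also have "\<dots> \<le> ennreal h * M"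
    unfolding A_def by (intro SUP_least nn_integral_interval_le_lattice_sums h sums) simp
  finally show ?thesis .
qed

lemma plancherel_inequality:
  fixes f :: "real \<Rightarrow> complex"
  assumes f: "square_integrable f" and L: "L > 0" and supp: "\<And>k. f k \<noteq> 0 \<Longrightarrow> k \<in> {-L..L}"
  shows "(\<integral>\<^sup>+x. ennreal ((cmod (\<integral>k. f k * exp (\<i> * complex_of_real (x * k)) \<partial>lborel))\<^sup>2) \<partial>lborel)
      \<le> ennreal (2 * pi * (\<integral>k. (cmod (f k))\<^sup>2 \<partial>lborel))"
proof -
  define F where "F x = (cmod (\<integral>k. f k * exp (\<i> * complex_of_real (x * k)) \<partial>lborel))\<^sup>2" for x
  define N where "N = (\<integral>k. (cmod (f k))\<^sup>2 \<partial>lborel)"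
  define h where "h = pi / L"
  have h: "h > 0" and hL: "h * L = pi" using L by (simp_all add: h_def)
  note [measurable] = square_integrable_measurable[OF f]
  have [measurable]: "F \<in> borel_measurable borel"
    unfolding F_def by measurable
  \<comment> \<open>the frequencies y + j h are (pi/L)-separated, so the exponentials are orthogonal on [-L, L]\<close>
  have "(\<Sum>j\<in>{-int n..<int n}. F (y + of_int j * h)) \<le> 2 * L * N" for y n
  proof -
    have inj: "inj_on (\<lambda>j::int. y + of_int j * h) {-int n..<int n}"
      using h by (auto simp: inj_on_def)
    have "(\<Sum>j\<in>{-int n..<int n}. F (y + of_int j * h)) = (\<Sum>x\<in>(\<lambda>j. y + of_int j * h) ` {-int n..<int n}. F x)"
      by (simp add: sum.reindex[OF inj])
    also have "\<dots> \<le> 2 * L * N" unfolding F_def N_def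
    proof (rule bessel_inequality_cexp[OF f L supp])
      show "finite ((\<lambda>j. y + of_int j * h) ` {-int n..<int n})" by simp
      fix x x' assume "x \<in> (\<lambda>j. y + of_int j * h) ` {-int n..<int n}" "x' \<in> (\<lambda>j. y + of_int j * h) ` {-int n..<int n}"
      then obtain j j' where "x = y + of_int j * h" "x' = y + of_int j' * h" by auto
      then have "(x - x') * L = of_int (j - j') * (h * L)" by (simp add: algebra_simps)
      then have "(x - x') * L = of_int (j - j') * pi" using hL by simp
      then show "sin ((x - x') * L) = 0" by (simp add: sin_times_pi_eq_0)
    qed
    finally show ?thesis .
  qed
  then have "(\<Sum>j\<in>{-int n..<int n}. ennreal (F (y + of_int j * h))) \<le> ennreal (2 * L * N)" for y n
    by (subst sum_ennreal) (auto simp: F_def intro: ennreal_leI)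
  from nn_integral_le_lattice_sums[where F="\<lambda>x. ennreal (F x)", OF _ h this]
  have "(\<integral>\<^sup>+x. ennreal (F x) \<partial>lborel) \<le> ennreal h * ennreal (2 * L * N)" by simp
  also have "\<dots> = ennreal (2 * pi * N)"
    using h L hL by (simp add: N_def ennreal_mult[symmetric] algebra_simps)
  finally show ?thesis unfolding F_def N_def .
qed

lemma L2_sqnorm_fourier_integral_le:
  fixes d :: "real \<Rightarrow> complex"
  assumes d: "square_integrable d" and S: "S > 0" and supp: "\<And>x. d x \<noteq> 0 \<Longrightarrow> x \<in> {-S..S}"
    and s: "s = 1 \<or> s = -1"
  shows "L2_sqnorm (\<lambda>k. complex_of_real (1 / sqrt (2 * pi)) *
      (\<integral>x. d x * exp (\<i> * complex_of_real ((s * k) * x)) \<partial>lborel))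
    \<le> ennreal (\<integral>x. (cmod (d x))\<^sup>2 \<partial>lborel)"
proof -
  define G where "G y = (cmod (\<integral>x. d x * exp (\<i> * complex_of_real (y * x)) \<partial>lborel))\<^sup>2" for y
  note [measurable] = square_integrable_measurable[OF d]
  have [measurable]: "G \<in> borel_measurable borel"
    unfolding G_def by measurable
  have "L2_sqnorm (\<lambda>k. complex_of_real (1 / sqrt (2 * pi)) *
      (\<integral>x. d x * exp (\<i> * complex_of_real ((s * k) * x)) \<partial>lborel)) =
      (\<integral>\<^sup>+k. ennreal (1 / (2 * pi)) * ennreal (G (s * k)) \<partial>lborel)"
    unfolding L2_sqnorm_def G_def
    by (intro nn_integral_cong) (simp add: norm_divide power_divide ennreal_mult[symmetric])
  also have "\<dots> = (\<integral>\<^sup>+y. ennreal (1 / (2 * pi)) * ennreal (G y) \<partial>lborel)"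
    using s nn_integral_real_affine[where c="-1" and t=0
        and f="\<lambda>y. ennreal (1 / (2 * pi)) * ennreal (G y)"] by auto
  also have "\<dots> = ennreal (1 / (2 * pi)) * (\<integral>\<^sup>+y. ennreal (G y) \<partial>lborel)"
    by (rule nn_integral_cmult) simp
  also have "\<dots> \<le> ennreal (1 / (2 * pi)) * ennreal (2 * pi * (\<integral>x. (cmod (d x))\<^sup>2 \<partial>lborel))"
    unfolding G_def by (intro mult_left_mono plancherel_inequality[OF d S supp]) auto
  also have "\<dots> = ennreal (\<integral>x. (cmod (d x))\<^sup>2 \<partial>lborel)"
    by (simp add: ennreal_mult[symmetric])
  finally show ?thesis .
qed

lemma L2_sqnorm_le_of_AE_limit:
  assumes [measurable]: "\<And>n. v n \<in> borel_measurable borel" "u \<in> borel_measurable borel"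
    and lim: "AE k in lborel. (\<lambda>n. v n k) \<longlonglongrightarrow> g k"
    and bound: "eventually (\<lambda>n. L2_sqnorm (\<lambda>k. u k - v n k) \<le> c) sequentially"
  shows "L2_sqnorm (\<lambda>k. u k - g k) \<le> c"
proof -
  have "AE k in lborel. ennreal ((cmod (u k - g k))\<^sup>2) = liminf (\<lambda>n. ennreal ((cmod (u k - v n k))\<^sup>2))"
    using lim
  proof eventually_elim
    case (elim k)
    have "(\<lambda>n. ennreal ((cmod (u k - v n k))\<^sup>2)) \<longlonglongrightarrow> ennreal ((cmod (u k - g k))\<^sup>2)"
      by (intro tendsto_ennrealI tendsto_intros elim)
    then show ?case by (rule lim_imp_Liminf[symmetric, rotated]) simp
  qed
  then have "L2_sqnorm (\<lambda>k. u k - g k) = (\<integral>\<^sup>+k. liminf (\<lambda>n. ennreal ((cmod (u k - v n k))\<^sup>2)) \<partial>lborel)"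
    unfolding L2_sqnorm_def by (rule nn_integral_cong_AE)
  also have "\<dots> \<le> liminf (\<lambda>n. L2_sqnorm (\<lambda>k. u k - v n k))"
    unfolding L2_sqnorm_def by (rule nn_integral_liminf) simp
  also have "\<dots> \<le> liminf (\<lambda>n. c)"
    using bound by (rule Liminf_mono)
  also have "\<dots> = c" by (simp add: Liminf_const)
  finally show ?thesis .
qed

lemma AE_eq_of_L2_and_pointwise_limit:
  assumes [measurable]: "\<And>n. v n \<in> borel_measurable borel" "u \<in> borel_measurable borel"
    and L2: "(\<lambda>n. L2_sqnorm (\<lambda>k. v n k - u k)) \<longlonglongrightarrow> 0"
    and lim: "\<And>k. k \<in> A \<Longrightarrow> (\<lambda>n. v n k) \<longlonglongrightarrow> g k"
  shows "AE k in lborel. k \<in> A \<longrightarrow> g k = u k"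
proof -
  define F where "F k = liminf (\<lambda>n. ennreal ((cmod (v n k - u k))\<^sup>2))" for k
  have [measurable]: "F \<in> borel_measurable borel" unfolding F_def by measurable
  have "(\<integral>\<^sup>+k. F k \<partial>lborel) \<le> liminf (\<lambda>n. L2_sqnorm (\<lambda>k. v n k - u k))"
    unfolding F_def L2_sqnorm_def by (rule nn_integral_liminf) simp
  also have "\<dots> = 0"
    using lim_imp_Liminf[OF _ L2] by simp
  finally have "AE k in lborel. F k \<le> 0"
    using nn_integral_0_iff_AE[of F lborel] by simp
  then show ?thesis
  proof eventually_elim
    case (elim k)
    show ?case
    proof
      assume "k \<in> A"
      then have "(\<lambda>n. ennreal ((cmod (v n k - u k))\<^sup>2)) \<longlonglongrightarrow> ennreal ((cmod (g k - u k))\<^sup>2)"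
        by (intro tendsto_ennrealI tendsto_intros lim)
      then have "F k = ennreal ((cmod (g k - u k))\<^sup>2)"
        unfolding F_def by (rule lim_imp_Liminf[rotated]) simp
      then show "g k = u k" using elim by simp
    qed
  qed
qed

lemma convergent_of_summable_weighted_increments:
  fixes v :: "nat \<Rightarrow> complex"
  assumes "summable (\<lambda>n. 4 ^ n * (cmod (v (Suc n) - v n))\<^sup>2)"
  shows "convergent v"
proof -
  have "eventually (\<lambda>n. 4 ^ n * (cmod (v (Suc n) - v n))\<^sup>2 < 1) sequentially"
    using summable_LIMSEQ_zero[OF assms] by (rule order_tendstoD) simp
  then have "eventually (\<lambda>n. norm (norm (v (Suc n) - v n)) \<le> (1/2) ^ n) sequentially"
  proof eventually_elim
    case (elim n)
    have "(4::real) ^ n = (2 ^ n)\<^sup>2"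
      by (simp add: power2_eq_square power_mult_distrib[symmetric])
    with elim have "(2 ^ n * cmod (v (Suc n) - v n))\<^sup>2 \<le> 1\<^sup>2"
      by (simp add: power_mult_distrib)
    then have "2 ^ n * cmod (v (Suc n) - v n) \<le> 1"
      by (rule power2_le_imp_le) simp
    then show ?case by (simp add: field_simps power_divide)
  qed
  then have "summable (\<lambda>n. norm (v (Suc n) - v n))"
    by (rule summable_comparison_test_ev) (simp add: summable_geometric)
  then have "summable (\<lambda>n. v (Suc n) - v n)"
    by (rule summable_norm_cancel)
  then have "(\<lambda>n. v 0 + (\<Sum>j<n. v (Suc j) - v j)) \<longlonglongrightarrow> v 0 + (\<Sum>j. v (Suc j) - v j)"
    by (intro tendsto_add tendsto_const summable_LIMSEQ)
  then show ?thesis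
    unfolding sum_lessThan_telescope convergent_def by auto
qed
lemma AE_convergent_of_fast_L2_Cauchy:
  assumes [measurable]: "\<And>n. v n \<in> borel_measurable borel"
    and fast: "\<And>n. L2_sqnorm (\<lambda>k. v (Suc n) k - v n k) \<le> ennreal ((1/8) ^ n)"
  shows "AE k in lborel. convergent (\<lambda>n. v n k)"
proof -
  define w where "w k = (\<Sum>n. ennreal (4 ^ n * (cmod (v (Suc n) k - v n k))\<^sup>2))" for k
  have [measurable]: "w \<in> borel_measurable borel"
    unfolding w_def by (intro borel_measurable_suminf_order) measurable
  have "(\<integral>\<^sup>+k. w k \<partial>lborel) = (\<Sum>n. ennreal (4 ^ n) * L2_sqnorm (\<lambda>k. v (Suc n) k - v n k))"
    unfolding w_def L2_sqnorm_def
    by (simp add: nn_integral_suminf ennreal_mult nn_integral_cmult)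
  also have "\<dots> \<le> (\<Sum>n. ennreal ((1/2) ^ n))"
  proof (intro suminf_le summableI)
    fix n
    have "ennreal (4 ^ n) * L2_sqnorm (\<lambda>k. v (Suc n) k - v n k) \<le> ennreal (4 ^ n) * ennreal ((1/8) ^ n)"
      by (intro mult_left_mono fast) simp
    also have "\<dots> = ennreal ((1/2) ^ n)"
      by (simp add: ennreal_mult[symmetric] power_mult_distrib[symmetric])
    finally show "ennreal (4 ^ n) * L2_sqnorm (\<lambda>k. v (Suc n) k - v n k) \<le> ennreal ((1/2) ^ n)" .
  qed
  also have "\<dots> = ennreal (\<Sum>n. (1/2) ^ n)"
    by (rule suminf_ennreal2) (auto intro: summable_geometric)
  also have "(\<Sum>n. (1/2::real) ^ n) = 2"
    using suminf_geometric[of "1/2::real"] by simp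
  finally have "(\<integral>\<^sup>+k. w k \<partial>lborel) \<noteq> \<infinity>"
    by (auto simp: top_unique)
  then have "AE k in lborel. w k \<noteq> \<infinity>"
    by (intro nn_integral_PInf_AE) (auto simp: infinity_ennreal_def)
  then show ?thesis
  proof eventually_elim
    case (elim k)
    then have "summable (\<lambda>n. 4 ^ n * (cmod (v (Suc n) k - v n k))\<^sup>2)"
      unfolding w_def by (intro summable_suminf_not_top) (auto simp: infinity_ennreal_def)
    then show ?case by (rule convergent_of_summable_weighted_increments)
  qed
qed

lemma square_integrable_of_L2_sqnorm_diff:
  assumes [measurable]: "g \<in> borel_measurable borel" "u \<in> borel_measurable borel"
    and "L2_sqnorm u < \<infinity>" "L2_sqnorm (\<lambda>k. u k - g k) < \<infinity>"
  shows "square_integrable g"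
proof -
  have "L2_sqnorm (\<lambda>k. (g k - u k) + u k) \<le> 2 * L2_sqnorm (\<lambda>k. g k - u k) + 2 * L2_sqnorm u"
    by (rule L2_sqnorm_add_le) measurable
  also have "L2_sqnorm (\<lambda>k. g k - u k) = L2_sqnorm (\<lambda>k. u k - g k)"
    by (simp add: L2_sqnorm_def norm_minus_commute)
  also have "2 * L2_sqnorm (\<lambda>k. u k - g k) + 2 * L2_sqnorm u < \<infinity>"
    using assms(3,4) by (simp add: ennreal_mult_less_top)
  finally show ?thesis by (simp add: square_integrable_iff_L2_sqnorm)
qed

lemma fast_decay_sequence:
  fixes \<tau> :: "real \<Rightarrow> ennreal"
  assumes "(\<tau> \<longlongrightarrow> 0) at_top"
  obtains r where "\<And>n. T \<le> r n" "\<And>n. real n \<le> r n" "\<And>n. r n \<le> r (Suc n)"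
    "\<And>n. \<tau> (r n) < ennreal ((1/8) ^ n)"
proof -
  have "\<exists>N. \<forall>R\<ge>N. \<tau> R < ennreal ((1/8) ^ n)" for n :: nat
    using order_tendstoD(2)[OF assms, of "ennreal ((1/8) ^ n)"] by (simp add: eventually_at_top_linorder)
  then obtain N where N: "\<And>n R. R \<ge> N n \<Longrightarrow> \<tau> R < ennreal ((1/8) ^ n)" by metis
  define r where "r n = \<bar>T\<bar> + real n + (\<Sum>j\<le>n. \<bar>N j\<bar>)" for n
  have r: "N n \<le> r n" "T \<le> r n" "real n \<le> r n" "r n \<le> r (Suc n)" for n
    using member_le_sum[of n "{..n}" "\<lambda>j. \<bar>N j\<bar>"] sum_nonneg[of "{..n}" "\<lambda>j. \<bar>N j\<bar>"]
    by (auto simp: r_def)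
  show ?thesis
  proof (rule that[of r])
    show "\<tau> (r n) < ennreal ((1/8) ^ n)" for n by (rule N) (rule r(1))
  qed (rule r)+
qed

lemma L2_Cauchy_limit_exists:
  fixes u :: "real \<Rightarrow> real \<Rightarrow> complex" and \<tau> :: "real \<Rightarrow> ennreal"
  assumes [measurable]: "\<And>R. u R \<in> borel_measurable borel"
    and Cauchy: "\<And>R S. T \<le> R \<Longrightarrow> R \<le> S \<Longrightarrow> L2_sqnorm (\<lambda>k. u S k - u R k) \<le> \<tau> R"
    and \<tau>: "(\<tau> \<longlongrightarrow> 0) at_top"
    and finite: "\<And>R. T \<le> R \<Longrightarrow> L2_sqnorm (u R) < \<infinity>"
  shows "\<exists>g. square_integrable g \<and> ((\<lambda>R. L2_sqnorm (\<lambda>k. u R k - g k)) \<longlongrightarrow> 0) at_top"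
proof -
  obtain r where r: "\<And>n. T \<le> r n" "\<And>n. real n \<le> r n" "\<And>n. r n \<le> r (Suc n)"
    "\<And>n. \<tau> (r n) < ennreal ((1/8) ^ n)"
    using fast_decay_sequence[OF \<tau>] by blast
  have "AE k in lborel. convergent (\<lambda>n. u (r n) k)"
  proof (rule AE_convergent_of_fast_L2_Cauchy)
    show "L2_sqnorm (\<lambda>k. u (r (Suc n)) k - u (r n) k) \<le> ennreal ((1/8) ^ n)" for n
      using order.trans[OF Cauchy[OF r(1) r(3)] less_imp_le[OF r(4)]] .
  qed measurable
  then have lim: "AE k in lborel. (\<lambda>n. u (r n) k) \<longlonglongrightarrow> lim (\<lambda>n. u (r n) k)"
    by eventually_elim (simp add: convergent_LIMSEQ_iff)
  define g where "g k = lim (\<lambda>n. u (r n) k)" for k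
  have [measurable]: "g \<in> borel_measurable borel" unfolding g_def by measurable
  have bound: "L2_sqnorm (\<lambda>k. u R k - g k) \<le> \<tau> R" if "T \<le> R" for R
  proof (rule L2_sqnorm_le_of_AE_limit[where v="\<lambda>n. u (r n)"])
    show "AE k in lborel. (\<lambda>n. u (r n) k) \<longlonglongrightarrow> g k" using lim by (simp add: g_def)
    show "eventually (\<lambda>n. L2_sqnorm (\<lambda>k. u R k - u (r n) k) \<le> \<tau> R) sequentially"
      using eventually_ge_at_top[of "nat \<lceil>R\<rceil>"]
    proof (rule eventually_mono)
      fix n assume "nat \<lceil>R\<rceil> \<le> n"
      then have "R \<le> r n" using r(2)[of n] by linarith
      from Cauchy[OF \<open>T \<le> R\<close> this]
      show "L2_sqnorm (\<lambda>k. u R k - u (r n) k) \<le> \<tau> R"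
        by (simp add: L2_sqnorm_def norm_minus_commute)
    qed
  qed measurable
  have "((\<lambda>R. L2_sqnorm (\<lambda>k. u R k - g k)) \<longlongrightarrow> 0) at_top"
  proof (rule tendsto_sandwich[OF _ _ tendsto_const \<tau>])
    show "eventually (\<lambda>R. L2_sqnorm (\<lambda>k. u R k - g k) \<le> \<tau> R) at_top"
      using eventually_ge_at_top[of T] by (rule eventually_mono) (rule bound)
  qed simp
  moreover have "square_integrable g"
  proof (rule square_integrable_of_L2_sqnorm_diff[where u="u (r 0)"])
    have "L2_sqnorm (\<lambda>k. u (r 0) k - g k) < 1"
      using order.strict_trans1[OF bound[OF r(1)] r(4)[of 0]] by simp
    then show "L2_sqnorm (\<lambda>k. u (r 0) k - g k) < \<infinity>"
      by (metis ennreal_one_less_top infinity_ennreal_def order.strict_trans)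
    show "L2_sqnorm (u (r 0)) < \<infinity>" by (rule finite[OF r(1)])
  qed measurable
  ultimately show ?thesis by blast
qed

lemma trunc_fourier_eq:
  "trunc_fourier s f R k = complex_of_real (1 / sqrt (2 * pi)) *
     (\<integral>x. (indicator {-R..R} x * f x) * exp (\<i> * complex_of_real ((s * k) * x)) \<partial>lborel)"
  unfolding trunc_fourier_def set_lebesgue_integral_def
  by (intro arg_cong2[where f="(*)"] refl Bochner_Integration.integral_cong)
     (auto simp: indicator_def mult.commute)

lemma trunc_fourier_measurable[measurable]:
  assumes [measurable]: "f \<in> borel_measurable borel"
  shows "(\<lambda>k. trunc_fourier s f R k) \<in> borel_measurable borel"
proof -
  have [measurable]: "(\<lambda>y. \<integral>x. (indicator {-R..R} x * f x) * exp (\<i> * complex_of_real (y * x)) \<partial>lborel)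
      \<in> borel_measurable borel"
    by measurable
  show ?thesis unfolding trunc_fourier_eq by measurable
qed

lemma tail_integral_tendsto_zero:
  fixes g :: "real \<Rightarrow> real"
  assumes "integrable lborel g"
  shows "((\<lambda>L. \<integral>q. \<bar>g q\<bar> * indicator {q. L < \<bar>q\<bar>} q \<partial>lborel) \<longlongrightarrow> 0) at_top"
proof -
  have [measurable]: "g \<in> borel_measurable borel" using borel_measurable_integrable[OF assms] by simp
  have "((\<lambda>L. \<integral>q. \<bar>g q\<bar> * indicator {q. L < \<bar>q\<bar>} q \<partial>lborel) \<longlongrightarrow> (\<integral>q. 0 \<partial>(lborel :: real measure))) at_top"
  proof (rule integral_dominated_convergence_at_top[where w="\<lambda>q. \<bar>g q\<bar>"])
    show "AE q in lborel. ((\<lambda>L. \<bar>g q\<bar> * indicator {q. L < \<bar>q\<bar>} q) \<longlongrightarrow> 0) at_top"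
    proof (intro AE_I2 tendsto_eventually)
      fix q :: real
      show "\<forall>\<^sub>F L in at_top. \<bar>g q\<bar> * indicator {q. L < \<bar>q\<bar>} q = 0"
        using eventually_ge_at_top[of "\<bar>q\<bar>"] by eventually_elim (auto simp: indicator_def)
    qed
  qed (use assms in \<open>auto simp: indicator_def\<close>)
  then show ?thesis by simp
qed

lemma L2_sqnorm_trunc_fourier_diff_le:
  assumes f: "square_integrable f" and s: "s = 1 \<or> s = -1" and "0 < R" "R \<le> S"
  shows "L2_sqnorm (\<lambda>k. trunc_fourier s f S k - trunc_fourier s f R k)
    \<le> ennreal (\<integral>x. (cmod (f x))\<^sup>2 * indicator {x. R < \<bar>x\<bar>} x \<partial>lborel)"
proof -
  define d where "d x = indicator {-S..S} x * f x - indicator {-R..R} x * f x" for x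
  have d: "square_integrable d"
    unfolding d_def by (intro square_integrable_diff square_integrable_indicator_mult f)
  have d_supp: "d x \<noteq> 0 \<Longrightarrow> x \<in> {-S..S}" for x
    using assms by (cases "-S \<le> x \<and> x \<le> S"; cases "-R \<le> x \<and> x \<le> R") (auto simp: d_def indicator_def)
  have diff_eq: "trunc_fourier s f S k - trunc_fourier s f R k = complex_of_real (1 / sqrt (2 * pi)) *
      (\<integral>x. d x * exp (\<i> * complex_of_real ((s * k) * x)) \<partial>lborel)" for k
  proof -
    have "integrable lborel (\<lambda>x. (indicator {a..b} x * f x) * exp (\<i> * complex_of_real ((s * k) * x)))" for a b
      by (rule integrable_mult_bounded[OF integrable_indicator_mult[OF f]]) auto
    then show ?thesis
      unfolding trunc_fourier_eq d_def
      by (simp add: right_diff_distrib left_diff_distrib Bochner_Integration.integral_diff)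
  qed
  have "L2_sqnorm (\<lambda>k. trunc_fourier s f S k - trunc_fourier s f R k) =
      L2_sqnorm (\<lambda>k. complex_of_real (1 / sqrt (2 * pi)) *
        (\<integral>x. d x * exp (\<i> * complex_of_real ((s * k) * x)) \<partial>lborel))"
    by (simp only: diff_eq)
  also have "\<dots> \<le> ennreal (\<integral>x. (cmod (d x))\<^sup>2 \<partial>lborel)"
    using assms by (intro L2_sqnorm_fourier_integral_le[OF d _ d_supp s]) auto
  also have "\<dots> \<le> ennreal (\<integral>x. (cmod (f x))\<^sup>2 * indicator {x. R < \<bar>x\<bar>} x \<partial>lborel)"
  proof (intro ennreal_leI integral_mono)
    show "integrable lborel (\<lambda>x. (cmod (f x))\<^sup>2 * indicator {x. R < \<bar>x\<bar>} x)"
      using square_integrable_measurable[OF f] square_integrable_integrable_sq[OF f]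
      by (intro integrable_real_mult_indicator) auto
    show "integrable lborel (\<lambda>x. (cmod (d x))\<^sup>2)"
      by (rule square_integrable_integrable_sq[OF d])
    show "(cmod (d x))\<^sup>2 \<le> (cmod (f x))\<^sup>2 * indicator {x. R < \<bar>x\<bar>} x" for x
      using assms by (auto simp: d_def indicator_def)
  qed
  finally show ?thesis .
qed

lemma fourier_rel_exists:
  assumes f: "square_integrable f" and s: "s = 1 \<or> s = -1"
  shows "\<exists>g. fourier_rel s f g"
proof -
  define \<tau> where "\<tau> R = ennreal (\<integral>x. (cmod (f x))\<^sup>2 * indicator {x. R < \<bar>x\<bar>} x \<partial>lborel)" for R
  note [measurable] = square_integrable_measurable[OF f]
  have "(\<tau> \<longlongrightarrow> ennreal 0) at_top"
    unfolding \<tau>_def using tail_integral_tendsto_zero[OF square_integrable_integrable_sq[OF f]]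
    by (intro tendsto_ennrealI) simp
  moreover have "L2_sqnorm (\<lambda>k. trunc_fourier s f R k) < \<infinity>" if "1 \<le> R" for R
  proof -
    have "L2_sqnorm (\<lambda>k. trunc_fourier s f R k) \<le> ennreal (\<integral>x. (cmod (indicator {-R..R} x * f x))\<^sup>2 \<partial>lborel)"
      unfolding trunc_fourier_eq using that
      by (intro L2_sqnorm_fourier_integral_le[OF square_integrable_indicator_mult[OF f] _ _ s])
        (auto simp: indicator_def)
    then show ?thesis using order.strict_trans1 by fastforce
  qed
  ultimately have "\<exists>g. square_integrable g \<and>
      ((\<lambda>R. L2_sqnorm (\<lambda>k. trunc_fourier s f R k - g k)) \<longlongrightarrow> 0) at_top"
  proof (intro L2_Cauchy_limit_exists[where u="\<lambda>R k. trunc_fourier s f R k" and T=1])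
    show "L2_sqnorm (\<lambda>k. trunc_fourier s f S k - trunc_fourier s f R k) \<le> \<tau> R"
      if "1 \<le> R" "R \<le> S" for R S
      unfolding \<tau>_def using that by (intro L2_sqnorm_trunc_fourier_diff_le[OF f s]) auto
  qed simp_all
  then show ?thesis by (auto simp: fourier_rel_iff)
qed

lemma fourier_rel_iFT: "square_integrable f \<Longrightarrow> fourier_rel 1 f (iFT f)"
  unfolding iFT_def by (rule someI_ex[OF fourier_rel_exists]) simp_all

lemma fourier_rel_FT: "square_integrable f \<Longrightarrow> fourier_rel (-1) f (FT f)"
  unfolding FT_def by (rule someI_ex[OF fourier_rel_exists]) simp_all

lemma integral_mult_tendsto_of_L2_tendsto:
  assumes [measurable]: "\<And>S. u S \<in> borel_measurable borel"
    and h: "square_integrable h" and c: "square_integrable c"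
    and L2: "((\<lambda>S. L2_sqnorm (\<lambda>k. u S k - h k)) \<longlongrightarrow> 0) F"
  shows "((\<lambda>S. \<integral>x. u S x * c x \<partial>lborel) \<longlongrightarrow> (\<integral>x. h x * c x \<partial>lborel)) F"
proof -
  note [measurable] = square_integrable_measurable[OF h]
  define C where "C = (\<integral>x. (cmod (c x))\<^sup>2 \<partial>lborel)"
  have bound: "eventually (\<lambda>S. norm ((\<integral>x. u S x * c x \<partial>lborel) - (\<integral>x. h x * c x \<partial>lborel))
      \<le> sqrt (enn2real (L2_sqnorm (\<lambda>k. u S k - h k))) * sqrt C) F"
    using order_tendstoD(2)[OF L2 ennreal_zero_less_top]
  proof eventually_elim
    case (elim S)
    have d: "square_integrable (\<lambda>x. u S x - h x)"
      using elim by (simp add: square_integrable_iff_L2_sqnorm)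
    have "(\<integral>x. u S x * c x \<partial>lborel) - (\<integral>x. h x * c x \<partial>lborel) = (\<integral>x. (u S x - h x) * c x \<partial>lborel)"
      using integrable_mult_square_integrable[OF square_integrable_add[OF d h] c]
        integrable_mult_square_integrable[OF h c]
      by (simp add: left_diff_distrib Bochner_Integration.integral_diff)
    also have "norm \<dots> \<le> (\<integral>x. cmod (u S x - h x) * cmod (c x) \<partial>lborel)"
      by (rule order_trans[OF integral_norm_bound]) (simp add: norm_mult)
    also have "\<dots> \<le> sqrt (\<integral>x. (cmod (u S x - h x))\<^sup>2 \<partial>lborel) * sqrt C"
      unfolding C_def by (rule Cauchy_Schwarz_square_integrable[OF d c])
    also have "(\<integral>x. (cmod (u S x - h x))\<^sup>2 \<partial>lborel) = enn2real (L2_sqnorm (\<lambda>k. u S k - h k))"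
      unfolding L2_sqnorm_def by (intro integral_eq_nn_integral) auto
    finally show ?case .
  qed
  have "((\<lambda>S. L2_sqnorm (\<lambda>k. u S k - h k)) \<longlongrightarrow> ennreal 0) F"
    using L2 by (simp only: ennreal_0)
  from tendsto_mult[OF tendsto_real_sqrt[OF tendsto_enn2real[OF this order.refl]] tendsto_const[of "sqrt C"]]
  have lim0: "((\<lambda>S. sqrt (enn2real (L2_sqnorm (\<lambda>k. u S k - h k))) * sqrt C) \<longlongrightarrow> 0) F"
    by simp
  have "((\<lambda>S. norm ((\<integral>x. u S x * c x \<partial>lborel) - (\<integral>x. h x * c x \<partial>lborel))) \<longlongrightarrow> 0) F"
    by (rule tendsto_sandwich[OF _ bound tendsto_const lim0]) simp
  then show ?thesis
    by (simp add: tendsto_norm_zero_iff LIM_zero_iff)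
qed

lemma integral_trunc_fourier_mult:
  assumes a: "square_integrable a" and c: "integrable lborel c"
  shows "(\<integral>x. trunc_fourier 1 a S x * c x \<partial>lborel) = complex_of_real (1 / sqrt (2 * pi)) *
      (\<integral>q. indicator {-S..S} q * a q * (\<integral>x. c x * exp (\<i> * complex_of_real (q * x)) \<partial>lborel) \<partial>lborel)"
proof -
  note [measurable] = square_integrable_measurable[OF a] borel_measurable_integrable[OF c]
  define A where "A q = indicator {-S..S} q * a q" for q
  have A: "integrable lborel A"
    unfolding A_def by (rule integrable_indicator_mult[OF a])
  define F where "F x q = A q * exp (\<i> * complex_of_real (x * q)) * c x" for x q
  have Fubini: "integrable (lborel \<Otimes>\<^sub>M lborel) (case_prod F)"
  proof (rule lborel_pair.Fubini_integrable)
    show "case_prod F \<in> borel_measurable (lborel \<Otimes>\<^sub>M lborel)" unfolding F_def A_def by measurable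
    have "(\<lambda>x. \<integral>q. norm (F x q) \<partial>lborel) = (\<lambda>x. (\<integral>q. cmod (A q) \<partial>lborel) * cmod (c x))"
      by (simp add: F_def norm_mult)
    then show "integrable lborel (\<lambda>x. \<integral>q. norm (case_prod F (x, q)) \<partial>lborel)"
      using c by auto
    show "AE x in lborel. integrable lborel (\<lambda>q. case_prod F (x, q))"
    proof (intro AE_I2)
      fix x
      have "integrable lborel (\<lambda>q. A q * (exp (\<i> * complex_of_real (x * q)) * c x))"
        by (rule integrable_mult_bounded[OF A, where B="cmod (c x)"]) (auto simp: norm_mult)
      then show "integrable lborel (\<lambda>q. case_prod F (x, q))" by (simp add: F_def mult.assoc)
    qed
  qed
  have "(\<integral>x. trunc_fourier 1 a S x * c x \<partial>lborel) =
      complex_of_real (1 / sqrt (2 * pi)) * (\<integral>x. (\<integral>q. F x q \<partial>lborel) \<partial>lborel)"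
    by (simp add: trunc_fourier_eq F_def A_def integral_mult_left_zero[symmetric] mult.assoc)
  also have "(\<integral>x. (\<integral>q. F x q \<partial>lborel) \<partial>lborel) = (\<integral>q. (\<integral>x. F x q \<partial>lborel) \<partial>lborel)"
    by (rule lborel_pair.Fubini_integral[symmetric, OF Fubini])
  also have "\<dots> = (\<integral>q. A q * (\<integral>x. c x * exp (\<i> * complex_of_real (q * x)) \<partial>lborel) \<partial>lborel)"
    by (simp add: F_def mult_ac)
  finally show ?thesis by (simp add: A_def)
qed

lemma fourier_rel_integral_mult:
  assumes a: "square_integrable a" and rel: "fourier_rel 1 a h"
    and c: "square_integrable c" "integrable lborel c"
    and ac: "integrable lborel (\<lambda>q. a q * (\<integral>x. c x * exp (\<i> * complex_of_real (q * x)) \<partial>lborel))"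
  shows "(\<integral>x. h x * c x \<partial>lborel) = complex_of_real (1 / sqrt (2 * pi)) *
    (\<integral>q. a q * (\<integral>x. c x * exp (\<i> * complex_of_real (q * x)) \<partial>lborel) \<partial>lborel)"
proof -
  define ac' where "ac' q = a q * (\<integral>x. c x * exp (\<i> * complex_of_real (q * x)) \<partial>lborel)" for q
  have "((\<lambda>S. \<integral>x. trunc_fourier 1 a S x * c x \<partial>lborel) \<longlongrightarrow> (\<integral>x. h x * c x \<partial>lborel)) at_top"
    using rel square_integrable_measurable[OF a]
    by (intro integral_mult_tendsto_of_L2_tendsto c) (auto simp: fourier_rel_iff)
  moreover have "((\<lambda>S. \<integral>x. trunc_fourier 1 a S x * c x \<partial>lborel) \<longlongrightarrow>
      complex_of_real (1 / sqrt (2 * pi)) * (\<integral>q. ac' q \<partial>lborel)) at_top"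
    unfolding integral_trunc_fourier_mult[OF a c(2)]
  proof (intro tendsto_mult tendsto_const)
    show "((\<lambda>S. \<integral>q. indicator {-S..S} q * a q * (\<integral>x. c x * exp (\<i> * complex_of_real (q * x)) \<partial>lborel) \<partial>lborel)
        \<longlongrightarrow> integral\<^sup>L lborel ac') at_top"
      unfolding mult.assoc ac'_def[symmetric]
    proof (rule integral_dominated_convergence_at_top[where w="\<lambda>q. cmod (ac' q)"])
      show "AE q in lborel. ((\<lambda>S. indicator {-S..S} q * ac' q) \<longlongrightarrow> ac' q) at_top"
      proof (intro AE_I2 tendsto_eventually)
        fix q :: real
        show "\<forall>\<^sub>F S in at_top. indicator {-S..S} q * ac' q = ac' q"
          using eventually_ge_at_top[of "\<bar>q\<bar>"] by eventually_elim (auto simp: indicator_def)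
      qed
    qed (use ac[folded ac'_def] in \<open>auto simp: indicator_def norm_mult\<close>)
  qed
  ultimately show ?thesis
    unfolding ac'_def by (rule tendsto_unique[OF trivial_limit_at_top_linorder])
qed

lemma fourier_coefficients_tendsto_zero:
  fixes g :: "real \<Rightarrow> complex" and L :: nat
  assumes g: "square_integrable g" and L: "L > 0" and supp: "\<And>q. g q \<noteq> 0 \<Longrightarrow> q \<in> {-real L..real L}"
  shows "(\<lambda>n::nat. \<integral>q. g q * exp (\<i> * complex_of_real ((real n * pi) * q)) \<partial>lborel) \<longlonglongrightarrow> 0"
proof -
  define c where "c n = (\<integral>q. g q * exp (\<i> * complex_of_real ((real n * pi) * q)) \<partial>lborel)" for n :: nat
  have "(\<Sum>n<N. (cmod (c n))\<^sup>2) \<le> 2 * real L * (\<integral>q. (cmod (g q))\<^sup>2 \<partial>lborel)" for N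
  proof -
    have inj: "inj_on (\<lambda>n::nat. real n * pi) {..<N}" by (auto simp: inj_on_def)
    have "(\<Sum>n<N. (cmod (c n))\<^sup>2) =
        (\<Sum>x\<in>(\<lambda>n. real n * pi) ` {..<N}. (cmod (\<integral>q. g q * exp (\<i> * complex_of_real (x * q)) \<partial>lborel))\<^sup>2)"
      by (simp add: sum.reindex[OF inj] c_def)
    also have "\<dots> \<le> 2 * real L * (\<integral>q. (cmod (g q))\<^sup>2 \<partial>lborel)"
    proof (rule bessel_inequality_cexp[OF g _ supp])
      fix x y assume "x \<in> (\<lambda>n. real n * pi) ` {..<N}" "y \<in> (\<lambda>n. real n * pi) ` {..<N}"
      then obtain n m where "x = real n * pi" "y = real m * pi" by auto
      then have "(x - y) * real L = of_int ((int n - int m) * int L) * pi" by (simp add: algebra_simps)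
      then show "sin ((x - y) * real L) = 0" by (simp only: sin_times_pi_eq_0 Ints_of_int)
    qed (use L in simp_all)
    finally show ?thesis .
  qed
  then have "summable (\<lambda>n. (cmod (c n))\<^sup>2)"
    by (intro summableI_nonneg_bounded) auto
  then have "(\<lambda>n. sqrt ((cmod (c n))\<^sup>2)) \<longlonglongrightarrow> sqrt 0"
    by (intro tendsto_real_sqrt summable_LIMSEQ_zero)
  then show ?thesis
    unfolding c_def[symmetric] by (simp add: tendsto_norm_zero_iff)
qed

lemma riemann_lebesgue_lattice:
  fixes g :: "real \<Rightarrow> complex"
  assumes g: "square_integrable g" "integrable lborel g"
  shows "(\<lambda>n::nat. \<integral>q. g q * exp (\<i> * complex_of_real ((real n * pi) * q)) \<partial>lborel) \<longlonglongrightarrow> 0"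
proof (rule LIMSEQ_I)
  fix r :: real assume r: "r > 0"
  note [measurable] = square_integrable_measurable[OF g(1)]
  obtain L0 where L0: "\<And>L. L \<ge> L0 \<Longrightarrow> (\<integral>q. cmod (g q) * indicator {q. L < \<bar>q\<bar>} q \<partial>lborel) < r / 2"
    using order_tendstoD(2)[OF tail_integral_tendsto_zero[of "\<lambda>q. cmod (g q)"], of "r / 2"] g(2) r
    by (auto simp: eventually_at_top_linorder)
  define L :: nat where "L = nat \<lceil>max L0 1\<rceil>"
  have L: "L > 0" "real L \<ge> L0" unfolding L_def by linarith+
  define gL where "gL q = indicator {-real L..real L} q * g q" for q
  define I where "I h n = (\<integral>q. h q * exp (\<i> * complex_of_real ((real n * pi) * q)) \<partial>lborel)" for h n
  have "I gL \<longlonglongrightarrow> 0"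
    unfolding I_def gL_def
    by (rule fourier_coefficients_tendsto_zero[OF square_integrable_indicator_mult[OF g(1)] L(1)])
      (auto simp: indicator_def)
  then obtain N where N: "\<And>n. n \<ge> N \<Longrightarrow> norm (I gL n) < r / 2"
    using r by (metis LIMSEQ_D diff_zero half_gt_zero)
  show "\<exists>N. \<forall>n\<ge>N. norm (I g n - 0) < r"
  proof (intro exI allI impI)
    fix n assume "n \<ge> N"
    have int: "integrable lborel (\<lambda>q. h q * exp (\<i> * complex_of_real ((real n * pi) * q)))"
      if "integrable lborel h" for h
      using that by (rule integrable_mult_bounded) auto
    have "norm (I g n - I gL n) = norm (\<integral>q. (g q - gL q) * exp (\<i> * complex_of_real ((real n * pi) * q)) \<partial>lborel)"
      unfolding I_def using int[OF g(2)] int[OF integrable_indicator_mult[OF g(1)]]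
      by (simp add: gL_def left_diff_distrib Bochner_Integration.integral_diff)
    also have "\<dots> \<le> (\<integral>q. norm ((g q - gL q) * exp (\<i> * complex_of_real ((real n * pi) * q))) \<partial>lborel)"
      by (rule integral_norm_bound)
    also have "\<dots> = (\<integral>q. cmod (g q) * indicator {q. real L < \<bar>q\<bar>} q \<partial>lborel)"
      by (intro Bochner_Integration.integral_cong) (auto simp: gL_def indicator_def norm_mult)
    also have "\<dots> < r / 2" using L0[OF L(2)] .
    finally show "norm (I g n - 0) < r"
      using N[OF \<open>n \<ge> N\<close>] norm_triangle_ineq[of "I g n - I gL n" "I gL n"] by simp
  qed
qed

definition osc_integral :: "real \<Rightarrow> real \<Rightarrow> complex" where
  "osc_integral \<alpha> R = (\<integral>x. indicator {0..R} x * exp (\<i> * complex_of_real (\<alpha> * x)) \<partial>lborel)"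

lemma osc_integral_eq:
  assumes "R \<ge> 0"
  shows "osc_integral \<alpha> R = (if \<alpha> = 0 then complex_of_real R
     else (exp (\<i> * complex_of_real (\<alpha> * R)) - 1) / (\<i> * complex_of_real \<alpha>))"
proof -
  have "osc_integral \<alpha> R = (LINT x:{0..R}|lborel. exp (\<i> * complex_of_real (\<alpha> * x)))"
    unfolding osc_integral_def set_lebesgue_integral_def
    by (intro Bochner_Integration.integral_cong) (auto simp: indicator_def)
  then show ?thesis using integral_cexp_Icc[of 0 R \<alpha>] assms by simp
qed

lemma osc_integral_squared_le:
  assumes R: "R \<ge> 0"
  shows "(cmod (osc_integral \<alpha> R))\<^sup>2 \<le> (R\<^sup>2 + 4) / (1 + \<alpha>\<^sup>2)"
proof -
  have "cmod (osc_integral \<alpha> R) \<le> (\<integral>x. norm (indicator {0..R} x * exp (\<i> * complex_of_real (\<alpha> * x))) \<partial>lborel)"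
    unfolding osc_integral_def by (rule integral_norm_bound)
  also have "\<dots> = (\<integral>x. indicator {0..R} x \<partial>lborel)"
    by (intro Bochner_Integration.integral_cong) (auto simp: indicator_def norm_mult)
  also have "\<dots> = R" using R by simp
  finally have "(cmod (osc_integral \<alpha> R))\<^sup>2 \<le> R\<^sup>2"
    by (intro power_mono) auto
  moreover have "\<alpha>\<^sup>2 * (cmod (osc_integral \<alpha> R))\<^sup>2 \<le> 4"
  proof (cases "\<alpha> = 0")
    case False
    have "cmod (exp (\<i> * complex_of_real (\<alpha> * R)) - 1) \<le> 2"
      using norm_triangle_ineq4[of "exp (\<i> * complex_of_real (\<alpha> * R))" 1] by simp
    then have "(\<bar>\<alpha>\<bar> * cmod (osc_integral \<alpha> R))\<^sup>2 \<le> 2\<^sup>2"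
      using R False by (intro power_mono) (simp_all add: osc_integral_eq norm_divide norm_mult)
    then show ?thesis by (simp add: power_mult_distrib)
  qed simp
  ultimately have "(1 + \<alpha>\<^sup>2) * (cmod (osc_integral \<alpha> R))\<^sup>2 \<le> R\<^sup>2 + 4"
    by (simp add: algebra_simps)
  then show ?thesis by (simp add: field_simps add_pos_nonneg)
qed

lemma square_integrable_osc_integral:
  assumes "R \<ge> 0"
  shows "square_integrable (\<lambda>q. osc_integral (q - k) R)"
proof (rule square_integrable_decay[where C="R\<^sup>2 + 4" and k=k])
  have "(\<lambda>(q, x). indicator {0..R} x * exp (\<i> * complex_of_real ((q - k) * x)))
      \<in> borel_measurable (lborel \<Otimes>\<^sub>M lborel)"
    by measurable
  from lborel.borel_measurable_lebesgue_integral[OF this]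
  show "(\<lambda>q. osc_integral (q - k) R) \<in> borel_measurable lborel"
    by (simp add: osc_integral_def)
qed (rule osc_integral_squared_le[OF assms])

definition sine_kernel :: "real \<Rightarrow> real \<Rightarrow> real" where
  "sine_kernel k q = sin (k\<^sup>2 - q\<^sup>2) / (k - q)"

lemma abs_sine_kernel_le: "\<bar>sine_kernel k q\<bar> \<le> 2 * \<bar>k\<bar> + 1"
proof (cases "\<bar>k - q\<bar> < 1")
  case True
  show ?thesis
  proof (cases "k = q")
    case False
    have "\<bar>sin (k\<^sup>2 - q\<^sup>2)\<bar> \<le> \<bar>k - q\<bar> * \<bar>k + q\<bar>"
      using abs_sin_x_le_abs_x[of "k\<^sup>2 - q\<^sup>2"] by (simp add: power2_eq_square algebra_simps abs_mult[symmetric])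
    then have "\<bar>sine_kernel k q\<bar> \<le> \<bar>k + q\<bar>"
      using False by (simp add: sine_kernel_def abs_divide field_simps)
    then show ?thesis using True by linarith
  qed (simp add: sine_kernel_def)
next
  case False
  then have "\<bar>sine_kernel k q\<bar> \<le> 1 / \<bar>k - q\<bar>"
    by (simp add: sine_kernel_def abs_divide divide_right_mono)
  also have "\<dots> \<le> 1" using False by simp
  finally show ?thesis by linarith
qed

lemma square_integrable_sine_kernel: "square_integrable (\<lambda>q. complex_of_real (sine_kernel k q))"
proof (rule square_integrable_decay[where C="(2 * \<bar>k\<bar> + 1)\<^sup>2 + 1" and k=k])
  show "(\<lambda>q. complex_of_real (sine_kernel k q)) \<in> borel_measurable lborel"
    unfolding sine_kernel_def by measurable
  fix q
  have "(sine_kernel k q)\<^sup>2 \<le> (2 * \<bar>k\<bar> + 1)\<^sup>2"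
    using abs_sine_kernel_le[of k q] by (metis abs_ge_zero power2_abs power_mono)
  moreover have "(q - k)\<^sup>2 * (sine_kernel k q)\<^sup>2 \<le> 1"
    by (cases "k = q") (simp_all add: sine_kernel_def power_divide power2_commute abs_square_le_1)
  ultimately have "(1 + (q - k)\<^sup>2) * (sine_kernel k q)\<^sup>2 \<le> (2 * \<bar>k\<bar> + 1)\<^sup>2 + 1"
    by (simp add: algebra_simps)
  then show "(cmod (complex_of_real (sine_kernel k q)))\<^sup>2 \<le> ((2 * \<bar>k\<bar> + 1)\<^sup>2 + 1) / (1 + (q - k)\<^sup>2)"
    by (simp add: field_simps add_pos_nonneg)
qed

lemma sine_kernel_osc_integral:
  assumes "R \<ge> 0"
  shows "(exp (- (\<i> * complex_of_real (k\<^sup>2 - q\<^sup>2))) - exp (\<i> * complex_of_real (k\<^sup>2 - q\<^sup>2))) * osc_integral (q - k) R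
    = 2 * complex_of_real (sine_kernel k q) * (exp (\<i> * complex_of_real ((q - k) * R)) - 1)"
proof (cases "q = k")
  case False
  have "exp (- (\<i> * complex_of_real t)) - exp (\<i> * complex_of_real t) = - 2 * \<i> * complex_of_real (sin t)" for t
    by (simp add: complex_eq_iff Re_exp Im_exp)
  then have "(exp (- (\<i> * complex_of_real (k\<^sup>2 - q\<^sup>2))) - exp (\<i> * complex_of_real (k\<^sup>2 - q\<^sup>2))) * osc_integral (q - k) R
      = (- 2 * \<i> * complex_of_real (sin (k\<^sup>2 - q\<^sup>2))) *
        ((exp (\<i> * complex_of_real ((q - k) * R)) - 1) / (\<i> * complex_of_real (q - k)))"
    using False assms by (simp only: osc_integral_eq) simp
  also have "\<dots> = 2 * complex_of_real (sine_kernel k q) * (exp (\<i> * complex_of_real ((q - k) * R)) - 1)"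
    using False unfolding sine_kernel_def by (simp add: field_simps of_real_divide)
  finally show ?thesis .
qed (simp add: sine_kernel_def)

lemma trunc_fourier_Proj_eq:
  assumes a: "square_integrable a" and rel: "fourier_rel 1 a h" and R: "R \<ge> 0"
  shows "trunc_fourier (-1) (Proj h) R k =
    complex_of_real (1 / (2 * pi)) * (\<integral>q. a q * osc_integral (q - k) R \<partial>lborel)"
proof -
  have h: "square_integrable h" using rel by (simp add: fourier_rel_def)
  note [measurable] = square_integrable_measurable[OF h]
  define c where "c x = indicator {0..R} x * exp (\<i> * complex_of_real ((-k) * x))" for x
  have c: "square_integrable c"
  proof (rule square_integrable_bounded_support[where C=1 and a=0 and b=R])
    show "c \<in> borel_measurable lborel" unfolding c_def by measurable
    show "cmod (c x) \<le> 1" for x by (simp add: c_def indicator_def norm_mult)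
    show "c x \<noteq> 0 \<Longrightarrow> x \<in> {0..R}" for x by (cases "x \<in> {0..R}") (simp_all add: c_def)
  qed
  have "(\<lambda>x. indicator {0..R} x * c x) = c"
    by (auto simp: c_def indicator_def)
  with integrable_indicator_mult[OF c] have "integrable lborel c" by metis
  have c_fourier: "(\<integral>x. c x * exp (\<i> * complex_of_real (q * x)) \<partial>lborel) = osc_integral (q - k) R" for q
    unfolding osc_integral_def c_def
    by (intro Bochner_Integration.integral_cong) (auto simp: mult_exp_exp algebra_simps)
  have "trunc_fourier (-1) (Proj h) R k = complex_of_real (1 / sqrt (2 * pi)) * (\<integral>x. h x * c x \<partial>lborel)"
    unfolding trunc_fourier_eq
  proof (intro arg_cong2[where f="(*)"] refl integral_cong_AE)
    show "AE x in lborel. indicator {-R..R} x * Proj h x * exp (\<i> * complex_of_real (-1 * k * x)) = h x * c x"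
      using AE_lborel_singleton[of 0] by eventually_elim (use R in \<open>auto simp: Proj_def c_def indicator_def\<close>)
  qed (auto simp: Proj_def c_def)
  also have "\<dots> = complex_of_real (1 / sqrt (2 * pi)) * complex_of_real (1 / sqrt (2 * pi)) *
      (\<integral>q. a q * osc_integral (q - k) R \<partial>lborel)"
    using fourier_rel_integral_mult[OF a rel c \<open>integrable lborel c\<close>, unfolded c_fourier]
      integrable_mult_square_integrable[OF a square_integrable_osc_integral[OF R]]
    by (simp only: mult.assoc)
  also have "complex_of_real (1 / sqrt (2 * pi)) * complex_of_real (1 / sqrt (2 * pi)) = complex_of_real (1 / (2 * pi))"
    by (simp flip: of_real_mult)
  finally show ?thesis .
qed

definition Bop_trunc :: "real \<Rightarrow> (real \<Rightarrow> complex) \<Rightarrow> real \<Rightarrow> complex" where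
  "Bop_trunc R \<psi> k = Ut 1 (trunc_fourier (-1) (Proj (iFT (Ut (-1) \<psi>))) R) k
     - Ut (-1) (trunc_fourier (-1) (Proj (iFT (Ut 1 \<psi>))) R) k"

lemma Bop_trunc_eq:
  assumes \<psi>: "square_integrable \<psi>" and R: "R \<ge> 0"
  shows "Bop_trunc R \<psi> k = complex_of_real (1 / pi) *
    ((\<integral>q. \<psi> q * complex_of_real (sine_kernel k q) * exp (\<i> * complex_of_real ((q - k) * R)) \<partial>lborel)
      - (\<integral>q. \<psi> q * complex_of_real (sine_kernel k q) \<partial>lborel))"
proof -
  define E where "E q = osc_integral (q - k) R" for q
  define W where "W q = \<psi> q * complex_of_real (sine_kernel k q)" for q
  have int_U: "integrable lborel (\<lambda>q. Ut t \<psi> q * E q)" for t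
    unfolding E_def by (rule integrable_mult_square_integrable[OF square_integrable_Ut[OF \<psi>] square_integrable_osc_integral[OF R]])
  have W: "integrable lborel W"
    unfolding W_def by (rule integrable_mult_square_integrable[OF \<psi> square_integrable_sine_kernel])
  have We: "integrable lborel (\<lambda>q. W q * exp (\<i> * complex_of_real ((q - k) * R)))"
    by (rule integrable_mult_bounded[OF W]) auto
  \<comment> \<open>the phases of U and U* combine into the sine kernel\<close>
  have pointwise: "exp (- \<i> * complex_of_real (k\<^sup>2 * 1)) * (Ut (-1) \<psi> q * E q)
      - exp (- \<i> * complex_of_real (k\<^sup>2 * -1)) * (Ut 1 \<psi> q * E q)
      = 2 * (W q * exp (\<i> * complex_of_real ((q - k) * R)) - W q)" for q
  proof -
    have "exp (- \<i> * complex_of_real (k\<^sup>2 * 1)) * (Ut (-1) \<psi> q * E q)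
        - exp (- \<i> * complex_of_real (k\<^sup>2 * -1)) * (Ut 1 \<psi> q * E q)
        = (exp (- (\<i> * complex_of_real (k\<^sup>2 - q\<^sup>2))) - exp (\<i> * complex_of_real (k\<^sup>2 - q\<^sup>2))) * E q * \<psi> q"
      unfolding Ut_def by (simp add: mult_exp_exp algebra_simps)
    also have "\<dots> = 2 * (W q * exp (\<i> * complex_of_real ((q - k) * R)) - W q)"
      unfolding E_def W_def sine_kernel_osc_integral[OF R] by (simp add: algebra_simps)
    finally show ?thesis .
  qed
  have "Bop_trunc R \<psi> k = complex_of_real (1 / (2 * pi)) *
      ((\<integral>q. exp (- \<i> * complex_of_real (k\<^sup>2 * 1)) * (Ut (-1) \<psi> q * E q) \<partial>lborel)
       - (\<integral>q. exp (- \<i> * complex_of_real (k\<^sup>2 * -1)) * (Ut 1 \<psi> q * E q) \<partial>lborel))"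
    unfolding Bop_trunc_def Ut_def[of _ "trunc_fourier (-1) _ R"] E_def integral_mult_right_zero
    by (simp add: trunc_fourier_Proj_eq[OF square_integrable_Ut[OF \<psi>] fourier_rel_iFT[OF square_integrable_Ut[OF \<psi>]] R]
        algebra_simps)
  also have "\<dots> = complex_of_real (1 / (2 * pi)) *
      (\<integral>q. exp (- \<i> * complex_of_real (k\<^sup>2 * 1)) * (Ut (-1) \<psi> q * E q)
        - exp (- \<i> * complex_of_real (k\<^sup>2 * -1)) * (Ut 1 \<psi> q * E q) \<partial>lborel)"
    using int_U by (subst Bochner_Integration.integral_diff) auto
  also have "\<dots> = complex_of_real (1 / (2 * pi)) * (\<integral>q. 2 * (W q * exp (\<i> * complex_of_real ((q - k) * R)) - W q) \<partial>lborel)"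
    by (simp only: pointwise)
  also have "\<dots> = complex_of_real (1 / pi) *
      ((\<integral>q. W q * exp (\<i> * complex_of_real ((q - k) * R)) \<partial>lborel) - (\<integral>q. W q \<partial>lborel))"
    using W We by (simp add: Bochner_Integration.integral_diff) (simp add: field_simps)
  finally show ?thesis by (simp add: W_def)
qed

lemma Bop_trunc_L2_tendsto:
  assumes \<psi>: "square_integrable \<psi>"
  shows "((\<lambda>R. L2_sqnorm (\<lambda>k. Bop_trunc R \<psi> k - Bop \<psi> k)) \<longlongrightarrow> 0) at_top"
proof -
  define h where "h t = Proj (iFT (Ut t \<psi>))" for t
  have h: "square_integrable (h t)" for t
    using fourier_rel_iFT[OF square_integrable_Ut[OF \<psi>]]
    by (auto simp: h_def fourier_rel_iff intro: square_integrable_Proj)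
  define T where "T t R = trunc_fourier (-1) (h t) R" for t R
  define G where "G t = FT (h t)" for t
  have G: "square_integrable (G t)"
    and T_G: "((\<lambda>R. L2_sqnorm (\<lambda>k. T t R k - G t k)) \<longlongrightarrow> 0) at_top" for t
    using fourier_rel_FT[OF h] by (auto simp: fourier_rel_iff T_def G_def)
  note [measurable] = square_integrable_measurable[OF h] square_integrable_measurable[OF G]
  have [measurable]: "T t R \<in> borel_measurable borel" for t R
    unfolding T_def by measurable
  have bound: "L2_sqnorm (\<lambda>k. Bop_trunc R \<psi> k - Bop \<psi> k) \<le>
      2 * L2_sqnorm (\<lambda>k. T (-1) R k - G (-1) k) + 2 * L2_sqnorm (\<lambda>k. T 1 R k - G 1 k)" for R
  proof -
    define A where "A k = T (-1) R k - G (-1) k" for k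
    define B where "B k = G 1 k - T 1 R k" for k
    have [measurable]: "A \<in> borel_measurable borel" "B \<in> borel_measurable borel"
      unfolding A_def B_def by measurable
    have "(\<lambda>k. Bop_trunc R \<psi> k - Bop \<psi> k) = (\<lambda>k. Ut 1 A k + Ut (-1) B k)"
      by (simp add: Bop_trunc_def Bop_def Pitilde_def T_def G_def h_def A_def B_def Ut_def algebra_simps)
    moreover have "L2_sqnorm (\<lambda>k. Ut 1 A k + Ut (-1) B k) \<le> 2 * L2_sqnorm (Ut 1 A) + 2 * L2_sqnorm (Ut (-1) B)"
      by (intro L2_sqnorm_add_le Ut_measurable) measurable
    moreover have "L2_sqnorm B = L2_sqnorm (\<lambda>k. T 1 R k - G 1 k)"
      by (simp add: B_def L2_sqnorm_def norm_minus_commute)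
    ultimately show ?thesis
      by (simp add: L2_sqnorm_Ut A_def[abs_def])
  qed
  have "((\<lambda>R. 2 * L2_sqnorm (\<lambda>k. T (-1) R k - G (-1) k) + 2 * L2_sqnorm (\<lambda>k. T 1 R k - G 1 k))
      \<longlongrightarrow> 2 * 0 + 2 * 0) at_top"
    by (intro tendsto_add ennreal_tendsto_cmult T_G) simp_all
  then have lim: "((\<lambda>R. 2 * L2_sqnorm (\<lambda>k. T (-1) R k - G (-1) k) + 2 * L2_sqnorm (\<lambda>k. T 1 R k - G 1 k))
      \<longlongrightarrow> 0) at_top"
    by simp
  show ?thesis
    by (rule tendsto_sandwich[OF _ _ tendsto_const lim]) (simp_all add: bound)
qed

lemma Bop_trunc_lattice_tendsto:
  assumes \<psi>: "square_integrable \<psi>"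
  shows "(\<lambda>n. Bop_trunc (real n * pi) \<psi> k) \<longlonglongrightarrow>
    - complex_of_real (1 / pi) * (\<integral>q. \<psi> q * complex_of_real (sine_kernel k q) \<partial>lborel)"
proof -
  define W where "W q = \<psi> q * complex_of_real (sine_kernel k q)" for q
  have "square_integrable W"
    unfolding W_def
  proof (rule square_integrable_mult_bounded[OF \<psi>])
    show "(\<lambda>q. complex_of_real (sine_kernel k q)) \<in> borel_measurable lborel"
      unfolding sine_kernel_def by measurable
    show "cmod (complex_of_real (sine_kernel k q)) \<le> 2 * \<bar>k\<bar> + 1" for q
      using abs_sine_kernel_le by simp
  qed
  moreover have "integrable lborel W"
    unfolding W_def by (rule integrable_mult_square_integrable[OF \<psi> square_integrable_sine_kernel])
  ultimately have "(\<lambda>n. \<integral>q. W q * exp (\<i> * complex_of_real ((real n * pi) * q)) \<partial>lborel) \<longlonglongrightarrow> 0"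
    by (rule riemann_lebesgue_lattice)
  then have "(\<lambda>n. norm (\<integral>q. W q * exp (\<i> * complex_of_real ((real n * pi) * q)) \<partial>lborel)) \<longlonglongrightarrow> 0"
    by (simp only: tendsto_norm_zero_iff)
  moreover have "norm (\<integral>q. W q * exp (\<i> * complex_of_real ((q - k) * (real n * pi))) \<partial>lborel) =
      norm (\<integral>q. W q * exp (\<i> * complex_of_real ((real n * pi) * q)) \<partial>lborel)" for n
  proof -
    have "(\<integral>q. W q * exp (\<i> * complex_of_real ((q - k) * (real n * pi))) \<partial>lborel) =
        (\<integral>q. exp (- (\<i> * complex_of_real (k * (real n * pi)))) *
          (W q * exp (\<i> * complex_of_real ((real n * pi) * q))) \<partial>lborel)"
      by (intro Bochner_Integration.integral_cong) (auto simp: mult_exp_exp algebra_simps)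
    then show ?thesis by (simp add: norm_mult)
  qed
  ultimately have "(\<lambda>n. norm (\<integral>q. W q * exp (\<i> * complex_of_real ((q - k) * (real n * pi))) \<partial>lborel))
      \<longlonglongrightarrow> 0"
    by (simp only:)
  then have "(\<lambda>n. \<integral>q. W q * exp (\<i> * complex_of_real ((q - k) * (real n * pi))) \<partial>lborel) \<longlonglongrightarrow> 0"
    by (simp only: tendsto_norm_zero_iff)
  then have "(\<lambda>n. complex_of_real (1 / pi) *
      ((\<integral>q. W q * exp (\<i> * complex_of_real ((q - k) * (real n * pi))) \<partial>lborel) - (\<integral>q. W q \<partial>lborel)))
      \<longlonglongrightarrow> complex_of_real (1 / pi) * (0 - (\<integral>q. W q \<partial>lborel))"
    by (intro tendsto_intros)
  then show ?thesis
    using Bop_trunc_eq[OF \<psi>, of "real n * pi" k for n] by (simp add: W_def)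
qed

lemma Kop_eq_sine_kernel_integral:
  assumes "k > 0"
  shows "Kop (eta \<phi>) k = - complex_of_real (1 / pi) * (\<integral>q. Proj \<phi> q * complex_of_real (sine_kernel k q) \<partial>lborel)"
proof -
  have "set_lebesgue_integral lborel {0<..} (\<lambda>q. complex_of_real (sin (k\<^sup>2 - q\<^sup>2) / (k - q)) * eta \<phi> q)
      = (\<integral>q. Proj \<phi> q * complex_of_real (sine_kernel k q) \<partial>lborel)"
    unfolding set_lebesgue_integral_def
    by (intro Bochner_Integration.integral_cong) (auto simp: indicator_def sine_kernel_def eta_def Proj_def)
  then show ?thesis using assms by (simp add: Kop_def)
qed

lemma Bop_measurable:
  assumes "square_integrable \<psi>"
  shows "Bop \<psi> \<in> borel_measurable borel" "Bop_trunc R \<psi> \<in> borel_measurable borel"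
proof -
  have h: "square_integrable (Proj (iFT (Ut t \<psi>)))" for t
    using fourier_rel_iFT[OF square_integrable_Ut[OF assms]]
    by (auto simp: fourier_rel_iff intro: square_integrable_Proj)
  have "Pitilde t \<psi> \<in> borel_measurable borel" for t
    using fourier_rel_FT[OF h] unfolding Pitilde_def fourier_rel_iff
    by (intro Ut_measurable square_integrable_measurable) simp
  then show "Bop \<psi> \<in> borel_measurable borel"
    unfolding Bop_def[abs_def] by (intro borel_measurable_diff)
  have "Ut t (trunc_fourier (-1) (Proj (iFT (Ut t' \<psi>))) R) \<in> borel_measurable borel" for t t'
    by (intro Ut_measurable trunc_fourier_measurable square_integrable_measurable h)
  then show "Bop_trunc R \<psi> \<in> borel_measurable borel"
    unfolding Bop_trunc_def[abs_def] by (intro borel_measurable_diff)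
qed

theorem proposition2:
  fixes \<phi> :: "real \<Rightarrow> complex"
  assumes "square_integrable \<phi>"
    and "AE k in lborel. k < 0 \<longrightarrow> \<phi> k = 0"
  shows "AE k in lborel. Kop (eta \<phi>) k = eta (Proj (Bop (Proj \<phi>))) k"
proof -
  have \<psi>: "square_integrable (Proj \<phi>)"
    by (rule square_integrable_Proj[OF assms(1)])
  have "filterlim (\<lambda>n. real n * pi) at_top sequentially"
    by (intro filterlim_at_top_mult_tendsto_pos[OF tendsto_const pi_gt_zero filterlim_real_sequentially])
  with Bop_trunc_L2_tendsto[OF \<psi>]
  have "(\<lambda>n. L2_sqnorm (\<lambda>k. Bop_trunc (real n * pi) (Proj \<phi>) k - Bop (Proj \<phi>) k)) \<longlonglongrightarrow> 0"
    by (rule filterlim_compose)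
  then have "AE k in lborel. k \<in> {0<..} \<longrightarrow>
      - complex_of_real (1 / pi) * (\<integral>q. Proj \<phi> q * complex_of_real (sine_kernel k q) \<partial>lborel) = Bop (Proj \<phi>) k"
    by (rule AE_eq_of_L2_and_pointwise_limit[OF Bop_measurable(2)[OF \<psi>] Bop_measurable(1)[OF \<psi>] _
          Bop_trunc_lattice_tendsto[OF \<psi>]])
  then show ?thesis
  proof eventually_elim
    case (elim k)
    show ?case
    proof (cases "k > 0")
      case True
      then show ?thesis using elim by (simp add: Kop_eq_sine_kernel_integral[OF True] eta_def Proj_def)
    qed (simp add: Kop_def eta_def)
  qed
qed

end
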